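(* Assume the setting described in the context (quadratic nonlinearity). Let $f_0\in F$, $T\in(0,+\infty]$, and $\varphi_{ap}\in C([0,T),F)$. Suppose there are nondecreasing continuous functions $\mathcal E,\mathcal D:[0,T]\to[0,+\infty)$ (for $T=+\infty$ their values at $+\infty$ being their limits) such that $\|E(\varphi_{ap})(t)\|\le\mathcal E(t)$ and $\|\varphi_{ap}(t)\|\le\mathcal D(t)$ for all $t\in[0,T)$, where $E(\varphi_{ap})(t):=\varphi_{ap}(t)-e^{t\mathcal A}f_0-\int_0^te^{(t-s)\mathcal A}\mathcal P(\varphi_{ap}(s),s)\,ds$, and $$2\sqrt{K\,\mathcal U(T)\,\mathcal E(T)}+2K\,\mathcal U(T)\,\mathcal D(T)\le1.$$ Then VP$(f_0)$ has a solution $\varphi:[0,T)\to F$ and $\|\varphi(t)-\varphi_{ap}(t)\|\le\mathcal R(t)$ for all $t\in[0,T)$, where $\mathcal R(0):=\mathcal E(0)$ and, for $t\in(0,T)$, $$\mathcal R(t):=\frac{1-2K\mathcal U(t)\mathcal D(t)-\sqrt{(1-2K\mathcal U(t)\mathcal D(t))^2-4K\mathcal U(t)\mathcal E(t)}}{2K\,\mathcal U(t)};$$ this defines a nondecreasing function $\mathcal R\in C([0,T),[0,+\infty))$.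
   Context: Banach spaces over a common field. $X\hookrightarrow Y$ means $X$ is a dense subspace of $Y$ with continuous inclusion. Setting: $F_+,F,F_-$ Banach spaces with norms $\|\cdot\|_+,\|\cdot\|,\|\cdot\|_-$, $F_+\hookrightarrow F\hookrightarrow F_-$; $\mathcal A:F_+\to F_-$ linear with $\|\cdot\|_+$ equivalent on $F_+$ to $\|f\|_-+\|\mathcal Af\|_-$; $\mathcal A$ generates a strongly continuous semigroup $(e^{t\mathcal A})_{t\ge0}$ on $F_-$ (domain $F_+$); $e^{t\mathcal A}(F)\subset F$ ($t\ge0$) with $(f,t)\mapsto e^{t\mathcal A}f$ continuous $F\times[0,\infty)\to F$ and $\|e^{t\mathcal A}f\|\le u(t)\|f\|$ for some $u\in C([0,\infty),(0,\infty))$; $e^{t\mathcal A}(F_-)\subset F$ ($t>0$) with $(f,t)\mapsto e^{t\mathcal A}f$ continuous $F_-\times(0,\infty)\to F$ and $\|e^{t\mathcal A}f\|\le u_-(t)\|f\|_-$ for some $u_-\in C((0,\infty),(0,\infty))$ with $u_-(t)=O(t^{-(1-\sigma)})$ as $t\to0^+$, $\sigma\in(0,1]$. $\mathscr P:F\times F\to F_-$ is bilinear with $\|\mathscr P(f,g)\|_-\le K\|f\|\|g\|$, $K\in(0,\infty)$; $\xi:[0,+\infty)\to F_-$ locally Lipschitz; $\mathcal P(f,t):=\mathscr P(f,f)+\xi(t)$. $\mathcal U\in C([0,+\infty),[0,+\infty))$ is a nondecreasing function with $\int_0^tu_-(s)\,ds\le\mathcal U(t)$ for all $t$ and $\mathcal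 U(0)=0$; $\mathcal U(+\infty):=\lim_{t\to+\infty}\mathcal U(t)$. VP$(f_0)$ asks for $\varphi\in C([0,T),F)$ with $\varphi(t)=e^{t\mathcal A}f_0+\int_0^te^{(t-s)\mathcal A}\mathcal P(\varphi(s),s)\,ds$ for $t\in[0,T)$. *)

theory Defs
  imports "HOL-Analysis.Analysis" "HOL-Library.Landau_Symbols"
begin

definition dense_embedding :: "('a::real_normed_vector \<Rightarrow> 'b::real_normed_vector) \<Rightarrow> bool" where
  "dense_embedding j \<longleftrightarrow> bounded_linear j \<and> inj j \<and> closure (range j) = UNIV"

definition C0_semigroup :: "(real \<Rightarrow> 'm::real_normed_vector \<Rightarrow> 'm) \<Rightarrow> bool" where
  "C0_semigroup S \<longleftrightarrow>
     (\<forall>t\<ge>0. bounded_linear (S t)) \<and> S 0 = id \<and>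
     (\<forall>s\<ge>0. \<forall>t\<ge>0. S (s + t) = S s \<circ> S t) \<and>
     (\<forall>x. continuous_on {0..} (\<lambda>t. S t x))"

text \<open>\<open>S\<close> is generated by \<open>A\<close> with domain \<open>F\<^sub>+\<close> embedded by \<open>jp\<close>: the
  infinitesimal generator has domain exactly \<open>range jp\<close> and acts as \<open>A\<close> there.\<close>
definition generates :: "('p \<Rightarrow> 'm::real_normed_vector) \<Rightarrow> ('p \<Rightarrow> 'm) \<Rightarrow> (real \<Rightarrow> 'm \<Rightarrow> 'm) \<Rightarrow> bool" where
  "generates jp A S \<longleftrightarrow>
     (\<forall>x y. (((\<lambda>h. (1 / h) *\<^sub>R (S h x - x)) \<longlongrightarrow> y) (at_right 0))
            \<longleftrightarrow> (\<exists>p. x = jp p \<and> y = A p))"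

definition loc_lipschitz_nonneg :: "(real \<Rightarrow> 'b::metric_space) \<Rightarrow> bool" where
  "loc_lipschitz_nonneg g \<longleftrightarrow> (\<forall>b\<ge>0. \<exists>L. L-lipschitz_on {0..b} g)"

definition Ico0 :: "ereal \<Rightarrow> real set" where
  "Ico0 T = {t. 0 \<le> t \<and> ereal t < T}"

definition Icc0 :: "ereal \<Rightarrow> real set" where
  "Icc0 T = {t. 0 \<le> t \<and> ereal t \<le> T}"

definition duhamel :: "(real \<Rightarrow> 'm::real_normed_vector \<Rightarrow> 'f::banach) \<Rightarrow> ('f \<Rightarrow> 'f \<Rightarrow> 'm)
     \<Rightarrow> (real \<Rightarrow> 'm) \<Rightarrow> (real \<Rightarrow> 'f) \<Rightarrow> real \<Rightarrow> 'f" where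
  "duhamel Sm P \<xi> \<phi> t = integral {0..t} (\<lambda>s. Sm (t - s) (P (\<phi> s) (\<phi> s) + \<xi> s))"

definition bound_R :: "real \<Rightarrow> (real \<Rightarrow> real) \<Rightarrow> (real \<Rightarrow> real) \<Rightarrow> (real \<Rightarrow> real) \<Rightarrow> real \<Rightarrow> real" where
  "bound_R K U E D t =
     (if t = 0 then E 0
      else (1 - 2 * K * U t * D t - sqrt ((1 - 2 * K * U t * D t)\<^sup>2 - 4 * K * U t * E t))
           / (2 * K * U t))"

end

theory Submission
  imports Defs
begin

(* Let \<Gamma> be the Duhamel map \<Gamma> \<phi> t = e^{tA} f0 + \<integral>\<^sub>0\<^sup>t e^{(t-s)A} \<P>(\<phi> s, s) ds and consider the
   ball of continuous \<phi> with \<parallel>\<phi> t - \<phi>ap t\<parallel> \<le> \<R> t. Since \<P> is quadratic, on this ball \<Gamma> moves \<phi>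
   away from \<phi>ap by at most \<E> t + K \<U> t (\<R>\<^sup>2 + 2 \<R> \<D>), and \<R> t is precisely the smaller root of
   r = \<E> t + K \<U> t (r\<^sup>2 + 2 r \<D> t); the smallness hypothesis says that its discriminant is
   nonnegative. So \<Gamma> maps the ball into itself. On the ball \<Gamma> also satisfies the Volterra estimate
   \<parallel>\<Gamma> \<phi> - \<Gamma> \<psi>\<parallel>(t) \<le> 2K(\<R> + \<D>)(t) \<integral>\<^sub>0\<^sup>t u\<^sub>-(t-s) \<parallel>\<phi> - \<psi>\<parallel>(s) ds, where 2K(\<R> + \<D>) \<U> \<le> 1. As \<U> is
   continuous with \<U>(0) = 0, an exponential weight e^{\<gamma> s} turns this into a contraction with factor
   3/4, and the Picard iterates starting at \<phi>ap converge locally uniformly to a solution in the ball. *)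

section \<open>Improper integrals of dominated continuous functions\<close>

lemma dist_indefinite_integral_le:
  fixes f :: "real \<Rightarrow> 'a::banach"
  assumes cd: "a \<le> c" "c \<le> d" and f: "f integrable_on {a..d}" and h: "h integrable_on {a..d}"
    and le: "\<And>x. x \<in> {c..d} \<Longrightarrow> norm (f x) \<le> h x"
  shows "dist (integral {a..c} f) (integral {a..d} f) \<le> integral {a..d} h - integral {a..c} h"
proof -
  have "integral {a..d} f = integral {a..c} f + integral {c..d} f"
    "integral {a..d} h = integral {a..c} h + integral {c..d} h"
    using cd f h by (auto intro!: Henstock_Kurzweil_Integration.integral_combine[symmetric])
  moreover have "norm (integral {c..d} f) \<le> integral {c..d} h"
    using cd by (intro integral_norm_bound_integral le integrable_subinterval_real[OF f]
        integrable_subinterval_real[OF h]) auto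
  ultimately show ?thesis by (simp add: dist_norm norm_minus_commute)
qed

lemma uniformly_continuous_on_indefinite_integral_dominated:
  fixes f :: "real \<Rightarrow> 'a::banach"
  assumes f: "continuous_on {a..<b} f" and h: "h integrable_on {a..b}"
    and le: "\<And>x. x \<in> {a..<b} \<Longrightarrow> norm (f x) \<le> h x"
  shows "uniformly_continuous_on {a..<b} (\<lambda>c. integral {a..c} f)"
  unfolding uniformly_continuous_on_def
proof (intro allI impI)
  fix e :: real assume "0 < e"
  define H where "H c = integral {a..c} h" for c
  have "uniformly_continuous_on {a..b} H"
    unfolding H_def by (intro compact_uniformly_continuous indefinite_integral_continuous_1 h) simp
  with \<open>0 < e\<close> obtain \<delta> where \<delta>: "0 < \<delta>"
    and H: "\<And>x x'. x \<in> {a..b} \<Longrightarrow> x' \<in> {a..b} \<Longrightarrow> dist x' x < \<delta> \<Longrightarrow> dist (H x') (H x) < e"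
    unfolding uniformly_continuous_on_def by metis
  have F_H: "dist (integral {a..c} f) (integral {a..d} f) \<le> dist (H c) (H d)"
    if "c \<in> {a..<b}" "d \<in> {a..<b}" "c \<le> d" for c d
  proof -
    have "f integrable_on {a..d}"
      using that by (intro integrable_continuous_real continuous_on_subset[OF f]) auto
    then have "dist (integral {a..c} f) (integral {a..d} f) \<le> H d - H c"
      unfolding H_def using that le by (intro dist_indefinite_integral_le integrable_subinterval_real[OF h]) auto
    also have "\<dots> \<le> dist (H c) (H d)" unfolding dist_real_def by arith
    finally show ?thesis .
  qed
  show "\<exists>\<delta>>0. \<forall>x\<in>{a..<b}. \<forall>x'\<in>{a..<b}. dist x' x < \<delta> \<longrightarrow>
      dist (integral {a..x'} f) (integral {a..x} f) < e"
  proof (intro exI[of _ \<delta>] conjI ballI impI \<delta>)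
    fix x x' assume x: "x \<in> {a..<b}" "x' \<in> {a..<b}" "dist x' x < \<delta>"
    then have "dist (integral {a..x'} f) (integral {a..x} f) \<le> dist (H x') (H x)"
      using F_H[of x' x] F_H[of x x'] by (cases "x' \<le> x") (auto simp: dist_commute)
    also have "\<dots> < e" using x by (intro H) auto
    finally show "dist (integral {a..x'} f) (integral {a..x} f) < e" .
  qed
qed

lemma integrable_on_Icc_if_dominated_on_Ico:
  fixes f :: "real \<Rightarrow> 'a::banach"
  assumes ab: "a < b" and f: "continuous_on {a..<b} f" and h: "h integrable_on {a..b}"
    and le: "\<And>x. x \<in> {a..<b} \<Longrightarrow> norm (f x) \<le> h x"
  shows "f integrable_on {a..b}"
proof -
  define F where "F c = integral {a..c} f" for c
  \<comment> \<open>\<open>F\<close> extends continuously to \<open>b\<close>; the extension is a primitive of \<open>f\<close> on the whole of \<open>[a,b]\<close>.\<close>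
  obtain G where G: "uniformly_continuous_on {a..b} G" "\<And>x. x \<in> {a..<b} \<Longrightarrow> F x = G x"
    using uniformly_continuous_on_extension_on_closure[of "{a..<b}" F]
      uniformly_continuous_on_indefinite_integral_dominated[OF f h le] closure_atLeastLessThan[OF ab]
    unfolding F_def by metis
  have "(G has_vector_derivative f x) (at x)" if x: "x \<in> {a<..<b}" for x
  proof -
    define c where "c = (x + b) / 2"
    have xc: "a < x" "x < c" "c < b" using x by (auto simp: c_def)
    have "(F has_vector_derivative f x) (at x within {a..c})"
      unfolding F_def using xc by (intro integral_has_vector_derivative continuous_on_subset[OF f]) auto
    then have "(F has_vector_derivative f x) (at x)"
      using at_within_Icc_at[of a x c] xc by simp
    then show ?thesis
      by (rule has_vector_derivative_transform_within_open[of _ _ _ "{a<..<b}"]) (use x G(2) in auto)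
  qed
  then have "(f has_integral (G b - G a)) {a..b}"
    using ab uniformly_continuous_imp_continuous[OF G(1)]
    by (intro fundamental_theorem_of_calculus_interior_strong[of "{}"]) auto
  then show ?thesis by blast
qed

lemma continuous_on_Ico_dominated_integrable:
  fixes f :: "real \<Rightarrow> 'a::banach"
  assumes ab: "a \<le> b" and f: "continuous_on {a..<b} f" and h: "h integrable_on {a..b}"
    and le: "\<And>x. x \<in> {a..<b} \<Longrightarrow> norm (f x) \<le> h x"
  shows "f integrable_on {a..b}" "norm (integral {a..b} f) \<le> integral {a..b} h"
proof -
  show fi: "f integrable_on {a..b}"
    using ab integrable_on_Icc_if_dominated_on_Ico[OF _ f h le] integrable_on_refl
    by (cases "a = b") auto
  have neg: "negligible (({a..<b} - {a..b}) \<union> ({a..b} - {a..<b}))"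
    by (rule negligible_subset[of "{b}"]) auto
  have "integral {a..<b} g = integral {a..b} g" for g :: "real \<Rightarrow> 'c::banach"
    by (rule integral_spike_set) (auto intro: negligible_subset[OF neg])
  moreover have "norm (integral {a..<b} f) \<le> integral {a..<b} h"
    using fi h integrable_spike_set_eq[OF neg, of f] integrable_spike_set_eq[OF neg, of h] le
    by (intro integral_norm_bound_integral) auto
  ultimately show "norm (integral {a..b} f) \<le> integral {a..b} h"
    by metis
qed

lemma has_integral_reflect_shift:
  fixes f :: "real \<Rightarrow> 'a::real_normed_vector"
  shows "((\<lambda>s. f (c - s)) has_integral i) {a..b} \<longleftrightarrow> (f has_integral i) {c-b..c-a}"
proof -
  have "(f has_integral i) {c-b..c-a} \<longleftrightarrow> ((\<lambda>x. f (-x)) has_integral i) {a-c..b-c}"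
    using has_integral_reflect_real[of f i "c-a" "c-b"] by simp
  also have "\<dots> \<longleftrightarrow> ((\<lambda>x. f (- (x + (-c)))) has_integral i) {a-c-(-c)..b-c-(-c)}"
    using has_integral_shift_real_ivl_iff[of "\<lambda>x. f (-x)" i "a-c" "b-c" "-c"] by simp
  also have "\<dots> \<longleftrightarrow> ((\<lambda>s. f (c - s)) has_integral i) {a..b}" by (simp add: algebra_simps)
  finally show ?thesis by simp
qed

lemma integrable_reflect_shift:
  fixes f :: "real \<Rightarrow> 'a::real_normed_vector"
  shows "(\<lambda>s. f (c - s)) integrable_on {a..b} \<longleftrightarrow> f integrable_on {c-b..c-a}"
  unfolding integrable_on_def using has_integral_reflect_shift by blast

lemma integral_reflect_shift:
  fixes f :: "real \<Rightarrow> 'a::real_normed_vector"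
  shows "integral {a..b} (\<lambda>s. f (c - s)) = integral {c-b..c-a} f"
proof (cases "f integrable_on {c-b..c-a}")
  case True
  then show ?thesis using has_integral_reflect_shift[where f=f and c=c and i="integral {c-b..c-a} f" and a=a and b=b]
    by (auto intro: integral_unique)
next
  case False
  then show ?thesis using integrable_reflect_shift[where f=f and c=c and a=a and b=b] by (simp add: not_integrable_integral)
qed

lemma continuous_on_Ioc_dominated_integrable:
  fixes f :: "real \<Rightarrow> 'a::banach"
  assumes ab: "a \<le> b" and f: "continuous_on {a<..b} f" and h: "h integrable_on {a..b}"
    and le: "\<And>x. x \<in> {a<..b} \<Longrightarrow> norm (f x) \<le> h x"
  shows "f integrable_on {a..b}" "norm (integral {a..b} f) \<le> integral {a..b} h"
proof -
  have c: "continuous_on {-b..<-a} (\<lambda>s. f (0 - s))"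
    by (rule continuous_on_compose2[OF f]) (auto intro!: continuous_intros)
  have i: "(\<lambda>s. h (0 - s)) integrable_on {-b..-a}"
    using h integrable_reflect_shift[where f=h and c=0 and a="-b" and b="-a"] by simp
  have l: "norm (f (0 - x)) \<le> h (0 - x)" if "x \<in> {-b..<-a}" for x
    using le[of "0 - x"] that by simp
  from continuous_on_Ico_dominated_integrable[OF _ c i l] ab show "f integrable_on {a..b}" "norm (integral {a..b} f) \<le> integral {a..b} h"
    using integrable_reflect_shift[where f=f and c=0 and a="-b" and b="-a"] integral_reflect_shift[where f=f and c=0 and a="-b" and b="-a"]
      integral_reflect_shift[where f=h and c=0 and a="-b" and b="-a"] by simp_all
qed

lemma integrable_on_Icc_singular_at_0:
  fixes g :: "real \<Rightarrow> real"
  assumes g_cont: "continuous_on {0<..} g" and \<sigma>: "0 < \<sigma>"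
    and g_sing: "g \<in> O[at_right 0](\<lambda>t. t powr (-(1 - \<sigma>)))" and t: "0 \<le> t"
  shows "g integrable_on {0..t}"
proof -
  obtain c where c: "c > 0" and ev: "\<forall>\<^sub>F x in at_right 0. norm (g x) \<le> c * norm (x powr (-(1 - \<sigma>)))"
    using g_sing by (elim landau_o.bigE) auto
  obtain d where d: "d > 0" and near0: "\<And>x. 0 < x \<Longrightarrow> x < d \<Longrightarrow> norm (g x) \<le> c * norm (x powr (-(1 - \<sigma>)))"
    using ev unfolding eventually_at_right_field by auto
  define t' where "t' = min t (d/2)"
  have t': "0 \<le> t'" "t' \<le> t" "t' < d" using t d by (auto simp: t'_def)
  have near: "g integrable_on {0..t'}"
  proof (rule continuous_on_Ioc_dominated_integrable)
    show "continuous_on {0<..t'} g" by (rule continuous_on_subset[OF g_cont]) auto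
    show "(\<lambda>x. c * x powr (-(1 - \<sigma>))) integrable_on {0..t'}"
      using integrable_cmul[OF integrable_on_powr_from_0[of "-(1-\<sigma>)" t'], of c] \<sigma> t' by simp
    show "norm (g x) \<le> c * x powr (-(1 - \<sigma>))" if "x \<in> {0<..t'}" for x
      using near0[of x] that t' by auto
  qed (use t' in auto)
  show ?thesis
  proof (cases "t' = t")
    case False
    then have "g integrable_on {t'..t}"
      using t' d by (intro integrable_continuous_real continuous_on_subset[OF g_cont]) (auto simp: t'_def)
    then show ?thesis
      using Henstock_Kurzweil_Integration.integrable_combine[OF _ _ near] t' by blast
  qed (use near in simp)
qed

lemma integral_le_off_negligible:
  fixes f g :: "real \<Rightarrow> real"
  assumes "negligible N" "f integrable_on S" "g integrable_on S" "\<And>x. x \<in> S - N \<Longrightarrow> f x \<le> g x"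
  shows "integral S f \<le> integral S g"
proof -
  define f' where "f' x = (if x \<in> N then g x else f x)" for x
  have "integral S f = integral S f'"
    by (rule integral_spike[OF assms(1)]) (auto simp: f'_def)
  moreover have "f' integrable_on S"
    by (rule integrable_spike[OF assms(2) assms(1)]) (auto simp: f'_def)
  moreover have "integral S f' \<le> integral S g"
    by (rule integral_le) (use assms calculation(2) in \<open>auto simp: f'_def\<close>)
  ultimately show ?thesis by simp
qed

section \<open>Convolution with a singular kernel\<close>

\<comment> \<open>\<open>Sm t\<close> plays the smoothing semigroup \<open>e\<^sup>t\<^sup>\<A> : F\<^sub>- \<rightarrow> F\<close> (meaningful for \<open>t > 0\<close> only) and \<open>um\<close> its
  bound \<open>u\<^sub>-\<close>, which may blow up at \<open>0\<close> but is integrable there.\<close>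
locale duhamel_kernel =
  fixes Sm :: "real \<Rightarrow> 'm::real_normed_vector \<Rightarrow> 'f::banach" and um :: "real \<Rightarrow> real"
  assumes Sm_cont: "continuous_on (UNIV \<times> {0<..}) (\<lambda>(g, t). Sm t g)"
    and Sm_bound: "\<And>t g. t > 0 \<Longrightarrow> norm (Sm t g) \<le> um t * norm g"
    and um_cont: "continuous_on {0<..} um" and um_pos: "\<And>t. t > 0 \<Longrightarrow> um t > 0"
    and um_int: "\<And>t. t \<ge> 0 \<Longrightarrow> um integrable_on {0..t}"
    and Sm_linear: "\<And>t. t > 0 \<Longrightarrow> linear (Sm t)"
begin

definition conv :: "(real \<Rightarrow> 'm) \<Rightarrow> real \<Rightarrow> 'f" where
  "conv g t = integral {0..t} (\<lambda>s. Sm (t - s) (g s))"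

lemma continuous_on_Sm_comp:
  assumes "continuous_on S a" "continuous_on S g" "\<And>x. x \<in> S \<Longrightarrow> a x > 0"
  shows "continuous_on S (\<lambda>x. Sm (a x) (g x))"
proof -
  have "continuous_on S (\<lambda>x. (\<lambda>(g, t). Sm t g) (g x, a x))"
    by (rule continuous_on_compose2[OF Sm_cont]) (use assms in \<open>auto intro!: continuous_intros\<close>)
  then show ?thesis by simp
qed

lemma integral_um_nonneg: "0 \<le> a \<Longrightarrow> a \<le> b \<Longrightarrow> 0 \<le> integral {a..b} um"
  using integral_le_off_negligible[of "{0}" "\<lambda>_. 0" "{a..b}" um] um_pos
    integrable_subinterval_real[OF um_int[of b], of a b]
  by (force simp: less_eq_real_def)

lemma integral_um_combine:
  "0 \<le> a \<Longrightarrow> a \<le> b \<Longrightarrow> integral {0..a} um + integral {a..b} um = integral {0..b} um"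
  by (rule Henstock_Kurzweil_Integration.integral_combine) (use um_int[of b] in auto)

lemma integral_um_mono: "0 \<le> a \<Longrightarrow> a \<le> b \<Longrightarrow> integral {0..a} um \<le> integral {0..b} um"
  using integral_um_combine[of a b] integral_um_nonneg[of a b] by linarith

lemma integral_um_pos:
  assumes "0 < t"
  shows "0 < integral {0..t} um"
proof -
  have "continuous_on {t/2..t} um" by (rule continuous_on_subset[OF um_cont]) (use assms in auto)
  then obtain x0 where x0: "x0 \<in> {t/2..t}" "\<And>y. y \<in> {t/2..t} \<Longrightarrow> um x0 \<le> um y"
    using continuous_attains_inf[of "{t/2..t}" um] assms by auto
  have "0 < um x0 * (t / 2)" using x0 assms um_pos by simp
  also have "\<dots> = integral {t/2..t} (\<lambda>_. um x0)" using assms by simp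
  also have "\<dots> \<le> integral {t/2..t} um"
    by (rule integral_le) (use x0 integrable_subinterval_real[OF um_int[of t]] assms in auto)
  also have "\<dots> \<le> integral {0..t} um"
    using integral_um_combine[of "t/2" t] integral_um_nonneg[of 0 "t/2"] assms by simp
  finally show ?thesis .
qed

lemma integral_kernel_reflect:
  assumes "a \<le> b" "b \<le> t"
  shows "(\<lambda>s. um (t - s)) integrable_on {a..b}"
    "integral {a..b} (\<lambda>s. um (t - s)) = integral {t-b..t-a} um"
  using integrable_reflect_shift[where f=um and c=t and a=a and b=b]
    integral_reflect_shift[where f=um and c=t and a=a and b=b]
    integrable_subinterval_real[OF um_int[of "t-a"], of "t-b" "t-a"] assms by auto

lemma kernel_weighted_integrable:
  assumes ab: "a \<le> b" "b \<le> t" and w: "continuous_on {a..b} w"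
  shows "(\<lambda>s. um (t - s) * w s) integrable_on {a..b}"
proof -
  obtain W where W: "\<forall>s\<in>{a..b}. norm (w s) \<le> W"
    using compact_imp_bounded[OF compact_continuous_image[OF w]] unfolding bounded_iff by auto
  show ?thesis
  proof (rule continuous_on_Ico_dominated_integrable)
    show "continuous_on {a..<b} (\<lambda>s. um (t - s) * w s)"
      by (intro continuous_intros continuous_on_compose2[OF um_cont] continuous_on_subset[OF w])
        (use ab in auto)
    show "(\<lambda>s. W * um (t - s)) integrable_on {a..b}"
      using integrable_cmul[OF integral_kernel_reflect(1)[OF ab], of W] by simp
    show "norm (um (t - s) * w s) \<le> W * um (t - s)" if "s \<in> {a..<b}" for s
      using W um_pos[of "t - s"] that ab by (auto simp: abs_mult mult.commute intro!: mult_left_mono)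
  qed (use ab in auto)
qed

lemma kernel_weighted_integral_le:
  assumes ab: "a \<le> b" "b \<le> t" and w: "continuous_on {a..b} w"
    and wW: "\<And>s. s \<in> {a..b} \<Longrightarrow> w s \<le> W"
  shows "integral {a..b} (\<lambda>s. um (t - s) * w s) \<le> W * integral {t-b..t-a} um"
proof -
  have "integral {a..b} (\<lambda>s. um (t - s) * w s) \<le> integral {a..b} (\<lambda>s. W * um (t - s))"
  proof (rule integral_le_off_negligible[of "{b}"])
    show "(\<lambda>s. W * um (t - s)) integrable_on {a..b}"
      using integrable_cmul[OF integral_kernel_reflect(1)[OF ab], of W] by simp
    show "um (t - x) * w x \<le> W * um (t - x)" if "x \<in> {a..b} - {b}" for x
      using wW[of x] um_pos[of "t - x"] that ab by (simp add: mult.commute mult_left_mono)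
  qed (use kernel_weighted_integrable[OF ab w] in auto)
  also have "\<dots> = W * integral {t-b..t-a} um"
    using integral_kernel_reflect(2)[OF ab] by simp
  finally show ?thesis .
qed

lemma Sm_convolution_bounded:
  assumes at: "a \<le> t" and g: "continuous_on {a..t} g" and w: "continuous_on {a..t} w"
    and gw: "\<And>s. s \<in> {a..t} \<Longrightarrow> norm (g s) \<le> w s"
  shows "(\<lambda>s. Sm (t - s) (g s)) integrable_on {a..t}"
    "norm (integral {a..t} (\<lambda>s. Sm (t - s) (g s))) \<le> integral {a..t} (\<lambda>s. um (t - s) * w s)"
proof -
  have "continuous_on {a..<t} (\<lambda>s. Sm (t - s) (g s))"
    by (rule continuous_on_Sm_comp) (auto intro!: continuous_intros continuous_on_subset[OF g])
  moreover have "norm (Sm (t - s) (g s)) \<le> um (t - s) * w s" if "s \<in> {a..<t}" for s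
    using Sm_bound[of "t - s" "g s"] gw[of s] um_pos[of "t - s"] that
    by (force intro: order_trans mult_left_mono)
  ultimately show "(\<lambda>s. Sm (t - s) (g s)) integrable_on {a..t}"
    "norm (integral {a..t} (\<lambda>s. Sm (t - s) (g s))) \<le> integral {a..t} (\<lambda>s. um (t - s) * w s)"
    using continuous_on_Ico_dominated_integrable[OF at _ kernel_weighted_integrable[OF at order_refl w]]
    by blast+
qed

lemma norm_conv_le:
  assumes "0 \<le> t" "continuous_on {0..t} g" "\<And>s. s \<in> {0..t} \<Longrightarrow> norm (g s) \<le> G"
  shows "norm (conv g t) \<le> G * integral {0..t} um"
  using Sm_convolution_bounded(2)[of 0 t g "\<lambda>_. G"] kernel_weighted_integral_le[of 0 t t "\<lambda>_. G" G] assms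
  unfolding conv_def by auto

definition conv_trunc :: "real \<Rightarrow> (real \<Rightarrow> 'm) \<Rightarrow> real \<Rightarrow> 'f" where
  "conv_trunc \<delta> g t = integral {0..max 0 (t - \<delta>)} (\<lambda>s. Sm (t - s) (g s))"

\<comment> \<open>Rescaling \<open>s = m * u\<close> moves the variable endpoint into the integrand; \<open>max \<delta>\<close> changes nothing
  there but keeps \<open>Sm\<close> away from its singularity for all \<open>(t, u)\<close>.\<close>
lemma conv_trunc_rescaled:
  assumes \<delta>: "0 < \<delta>" and t: "0 \<le> t" and g: "continuous_on {0..t} g"
  defines "m \<equiv> max 0 (t - \<delta>)"
  shows "conv_trunc \<delta> g t = integral {0..1} (\<lambda>u. m *\<^sub>R Sm (max \<delta> (t - m * u)) (g (m * u)))"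
proof (cases "m = 0")
  case True
  then show ?thesis by (simp add: conv_trunc_def m_def)
next
  case False
  then have m: "0 < m" "m = t - \<delta>" by (auto simp: m_def)
  define f where "f = (\<lambda>s. Sm (t - s) (g s))"
  have "continuous_on {0..m} f"
    unfolding f_def using m t \<delta>
    by (intro continuous_on_Sm_comp continuous_intros continuous_on_subset[OF g]) auto
  then have "(f has_integral integral {0..m} f) (cbox 0 m)"
    by (simp add: integrable_integral integrable_continuous_real)
  from has_integral_cmul[OF has_integral_affinity'[OF this m(1), of 0], of m]
  have "((\<lambda>u. m *\<^sub>R f (m * u)) has_integral integral {0..m} f) (cbox 0 1)"
    using m by simp
  moreover have "m *\<^sub>R f (m * u) = m *\<^sub>R Sm (max \<delta> (t - m * u)) (g (m * u))" if "u \<in> cbox 0 1" for u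
  proof -
    have "m * u \<le> m" using that m by (simp add: mult_left_le)
    then have "\<delta> \<le> t - m * u" using m(2) by linarith
    then show ?thesis by (simp add: f_def max_absorb2)
  qed
  ultimately have "((\<lambda>u. m *\<^sub>R Sm (max \<delta> (t - m * u)) (g (m * u))) has_integral integral {0..m} f) (cbox 0 1)"
    by (rule has_integral_eq[rotated]) simp
  then have "integral {0..1} (\<lambda>u. m *\<^sub>R Sm (max \<delta> (t - m * u)) (g (m * u))) = integral {0..m} f"
    unfolding box_real(2)[symmetric] by (rule integral_unique)
  then show ?thesis by (simp only: conv_trunc_def f_def m_def)
qed

lemma continuous_on_conv_trunc:
  assumes \<delta>: "0 < \<delta>" and g: "continuous_on {0..b} g"
  shows "continuous_on {0..b} (conv_trunc \<delta> g)"
proof -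
  define m where "m t = max 0 (t - \<delta>)" for t
  have "m t * u \<in> {0..b}" if "t \<in> {0..b}" "u \<in> {0..1}" for t u
  proof -
    have "m t * u \<le> m t" using that by (intro mult_left_le) (auto simp: m_def)
    also have "m t \<le> b" using that \<delta> by (auto simp: m_def)
    finally show ?thesis using that by (auto simp: m_def)
  qed
  then have "continuous_on ({0..b} \<times> cbox 0 1) (\<lambda>x. g (m (fst x) * snd x))"
    unfolding m_def by (intro continuous_on_compose2[OF g] continuous_intros) auto
  then have "continuous_on ({0..b} \<times> cbox 0 1)
      (\<lambda>x. m (fst x) *\<^sub>R Sm (max \<delta> (fst x - m (fst x) * snd x)) (g (m (fst x) * snd x)))"
    unfolding m_def using \<delta> by (intro continuous_intros continuous_on_Sm_comp) auto
  then have "continuous_on {0..b} (\<lambda>t. integral (cbox 0 1) (\<lambda>u. m t *\<^sub>R Sm (max \<delta> (t - m t * u)) (g (m t * u))))"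
    by (intro integral_continuous_on_param) (simp add: case_prod_beta)
  then show ?thesis
  proof (rule continuous_on_eq)
    fix t assume t: "t \<in> {0..b}"
    have "conv_trunc \<delta> g t = integral {0..1} (\<lambda>u. m t *\<^sub>R Sm (max \<delta> (t - m t * u)) (g (m t * u)))"
      unfolding m_def using t by (intro conv_trunc_rescaled \<delta> continuous_on_subset[OF g]) auto
    then show "integral (cbox 0 1) (\<lambda>u. m t *\<^sub>R Sm (max \<delta> (t - m t * u)) (g (m t * u))) = conv_trunc \<delta> g t"
      by (simp only: box_real(2))
  qed
qed

lemma norm_conv_minus_trunc_le:
  assumes \<delta>: "0 < \<delta>" and t: "0 \<le> t" and g: "continuous_on {0..t} g"
    and G: "\<And>s. s \<in> {0..t} \<Longrightarrow> norm (g s) \<le> G"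
  shows "norm (conv g t - conv_trunc \<delta> g t) \<le> G * integral {0..\<delta>} um"
proof -
  have G0: "0 \<le> G" using G[of t] t by (meson atLeastAtMost_iff norm_ge_zero order_refl order_trans)
  show ?thesis
  proof (cases "t \<le> \<delta>")
    case True
    then have "norm (conv g t - conv_trunc \<delta> g t) \<le> G * integral {0..t} um"
      using norm_conv_le[OF t g G] by (simp add: conv_trunc_def)
    also have "\<dots> \<le> G * integral {0..\<delta>} um"
      using integral_um_mono[OF t True] G0 by (rule mult_left_mono)
    finally show ?thesis .
  next
    case False
    have fi: "(\<lambda>s. Sm (t - s) (g s)) integrable_on {0..t}"
      using Sm_convolution_bounded(1)[OF t g, of "\<lambda>_. G"] G by auto
    have "conv g t = conv_trunc \<delta> g t + integral {t - \<delta>..t} (\<lambda>s. Sm (t - s) (g s))"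
      unfolding conv_def conv_trunc_def
      using Henstock_Kurzweil_Integration.integral_combine[OF _ _ fi, of "t - \<delta>"] False \<delta> by simp
    moreover have "norm (integral {t - \<delta>..t} (\<lambda>s. Sm (t - s) (g s))) \<le> G * integral {t - t..t - (t - \<delta>)} um"
      using Sm_convolution_bounded(2)[of "t - \<delta>" t g "\<lambda>_. G"]
        kernel_weighted_integral_le[of "t - \<delta>" t t "\<lambda>_. G" G] g G \<delta> False
      by (force intro: order_trans continuous_on_subset[OF g])
    ultimately show ?thesis by simp
  qed
qed

lemma continuous_on_conv:
  assumes b: "0 \<le> b" and g: "continuous_on {0..b} g"
  shows "continuous_on {0..b} (conv g)"
proof -
  obtain G where G: "\<forall>s\<in>{0..b}. norm (g s) \<le> G"
    using compact_imp_bounded[OF compact_continuous_image[OF g]] unfolding bounded_iff by auto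
  define V where "V x = integral {0..x} um" for x
  have "(\<lambda>n. 1 / real (Suc n)) \<longlonglongrightarrow> 0"
    using LIMSEQ_inverse_real_of_nat by (simp add: inverse_eq_divide)
  moreover have "continuous_on {0..1} V"
    unfolding V_def by (rule indefinite_integral_continuous_1[OF um_int]) simp
  ultimately have "((\<lambda>n. V (1 / Suc n)) \<longlongrightarrow> V 0) sequentially"
    by (intro continuous_on_tendsto_compose[of "{0..1}" V]) (auto simp: field_simps)
  then have lim: "((\<lambda>n. G * V (1 / Suc n)) \<longlongrightarrow> 0) sequentially"
    using tendsto_mult_right_zero by (auto simp: V_def)
  have "uniform_limit {0..b} (\<lambda>n. conv_trunc (1 / Suc n) g) (conv g) sequentially"
  proof (rule uniform_limitI)
    fix e :: real assume "0 < e"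
    with lim have "\<forall>\<^sub>F n in sequentially. G * V (1 / Suc n) < e"
      by (auto dest: order_tendstoD(2))
    then show "\<forall>\<^sub>F n in sequentially. \<forall>t\<in>{0..b}. dist (conv_trunc (1 / Suc n) g t) (conv g t) < e"
    proof eventually_elim
      case (elim n)
      show ?case
      proof
        fix t assume t: "t \<in> {0..b}"
        have "norm (conv g t - conv_trunc (1 / Suc n) g t) \<le> G * V (1 / Suc n)"
          unfolding V_def using t G
          by (intro norm_conv_minus_trunc_le continuous_on_subset[OF g]) auto
        then show "dist (conv_trunc (1 / Suc n) g t) (conv g t) < e"
          using elim by (simp add: dist_norm norm_minus_commute)
      qed
    qed
  qed
  then show ?thesis
    by (rule uniform_limit_theorem[rotated]) (simp_all add: continuous_on_conv_trunc[OF _ g])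
qed

lemma kernel_exp_weighted_le:
  assumes \<delta>: "0 < \<delta>" and t: "0 \<le> t"
  defines "\<gamma> \<equiv> ln 2 / \<delta>"
  shows "integral {0..t} (\<lambda>s. um (t - s) * exp (\<gamma> * s))
    \<le> exp (\<gamma> * t) * (integral {0..t} um / 2 + integral {0..\<delta>} um)"
proof -
  have exp_mono: "exp (\<gamma> * s) \<le> exp (\<gamma> * s')" if "s \<le> s'" for s s'
    using that \<delta> unfolding \<gamma>_def by (intro exp_le_cancel_iff[THEN iffD2] mult_left_mono) auto
  have exp_cont: "continuous_on S (\<lambda>s. exp (\<gamma> * s))" for S
    by (intro continuous_intros)
  have nonneg: "0 \<le> integral {0..x} um" if "0 \<le> x" for x
    using integral_um_nonneg[OF order_refl that] .
  show ?thesis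
  proof (cases "t \<le> \<delta>")
    case True
    have "integral {0..t} (\<lambda>s. um (t - s) * exp (\<gamma> * s)) \<le> exp (\<gamma> * t) * integral {t - t..t - 0} um"
      using t exp_mono by (intro kernel_weighted_integral_le exp_cont) auto
    also have "\<dots> \<le> exp (\<gamma> * t) * (integral {0..t} um / 2 + integral {0..\<delta>} um)"
      using integral_um_mono[OF t True] nonneg[OF t] by (intro mult_left_mono) auto
    finally show ?thesis .
  next
    case False
    \<comment> \<open>Away from the singularity the weight has already halved.\<close>
    have half: "exp (\<gamma> * (t - \<delta>)) = exp (\<gamma> * t) / 2"
      using \<delta> by (simp add: \<gamma>_def right_diff_distrib exp_diff)
    have "integral {0..t} (\<lambda>s. um (t - s) * exp (\<gamma> * s))
        = integral {0..t-\<delta>} (\<lambda>s. um (t - s) * exp (\<gamma> * s)) + integral {t-\<delta>..t} (\<lambda>s. um (t - s) * exp (\<gamma> * s))"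
      using False \<delta> kernel_weighted_integrable[OF t order_refl exp_cont]
      by (intro Henstock_Kurzweil_Integration.integral_combine[symmetric]) auto
    also have "\<dots> \<le> exp (\<gamma> * (t - \<delta>)) * integral {\<delta>..t} um + exp (\<gamma> * t) * integral {0..\<delta>} um"
    proof (rule add_mono)
      show "integral {0..t-\<delta>} (\<lambda>s. um (t - s) * exp (\<gamma> * s)) \<le> exp (\<gamma> * (t - \<delta>)) * integral {\<delta>..t} um"
        using kernel_weighted_integral_le[of 0 "t - \<delta>" t "\<lambda>s. exp (\<gamma> * s)"] False \<delta> exp_mono exp_cont by auto
      show "integral {t-\<delta>..t} (\<lambda>s. um (t - s) * exp (\<gamma> * s)) \<le> exp (\<gamma> * t) * integral {0..\<delta>} um"
        using kernel_weighted_integral_le[of "t - \<delta>" t t "\<lambda>s. exp (\<gamma> * s)"] False \<delta> exp_mono exp_cont by auto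
    qed
    also have "\<dots> \<le> exp (\<gamma> * t) * (integral {0..t} um / 2 + integral {0..\<delta>} um)"
      using integral_um_combine[of \<delta> t] nonneg[of \<delta>] False \<delta> unfolding half
      by (simp add: algebra_simps)
    finally show ?thesis .
  qed
qed

lemma norm_conv_diff_le:
  assumes t: "0 \<le> t" and g: "continuous_on {0..t} g" and h: "continuous_on {0..t} h"
    and w: "continuous_on {0..t} w" and gh: "\<And>s. s \<in> {0..t} \<Longrightarrow> norm (g s - h s) \<le> w s"
  shows "norm (conv g t - conv h t) \<le> integral {0..t} (\<lambda>s. um (t - s) * w s)"
proof -
  have int: "(\<lambda>s. Sm (t - s) (f s)) integrable_on {0..t}" if "continuous_on {0..t} f" for f
    using Sm_convolution_bounded(1)[OF t that, of "\<lambda>s. norm (f s)"] that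
    by (auto intro: continuous_intros)
  have "conv g t - conv h t = integral {0..t} (\<lambda>s. Sm (t - s) (g s) - Sm (t - s) (h s))"
    unfolding conv_def by (rule integral_diff[symmetric, OF int[OF g] int[OF h]])
  also have "\<dots> = integral {0..t} (\<lambda>s. Sm (t - s) (g s - h s))"
    by (rule integral_spike[of "{t}"]) (auto simp: linear_diff[OF Sm_linear])
  finally show ?thesis
    using Sm_convolution_bounded(2)[OF t _ w gh] g h by (auto intro: continuous_intros)
qed

end

section \<open>The smaller root of the quadratic\<close>

\<comment> \<open>The smaller root of \<open>k r\<^sup>2 - (1 - 2 k d) r + e = 0\<close>, i.e.\ of \<open>r = e + k (r\<^sup>2 + 2 r d)\<close>, in the
  rationalised form that stays meaningful for \<open>k = 0\<close>.\<close>
definition small_root :: "real \<Rightarrow> real \<Rightarrow> real \<Rightarrow> real" where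
  "small_root k e d = 2 * e / (1 - 2 * k * d + sqrt ((1 - 2 * k * d)\<^sup>2 - 4 * k * e))"

context
  fixes k e d :: real
  assumes k: "0 \<le> k" and e: "0 \<le> e" and small: "2 * sqrt (k * e) + 2 * k * d \<le> 1"
begin

private abbreviation "a \<equiv> 1 - 2 * k * d"
private abbreviation "s \<equiv> sqrt (a\<^sup>2 - 4 * k * e)"

lemma small_root_discriminant: "0 \<le> a" "4 * k * e \<le> a\<^sup>2" "0 \<le> s" "s \<le> a"
proof -
  have ke: "0 \<le> k * e" using k e by simp
  then have "0 \<le> sqrt (k * e)" by simp
  then show "0 \<le> a" using small by linarith
  have "(2 * sqrt (k * e))\<^sup>2 \<le> a\<^sup>2"
    using small ke by (intro power_mono) (auto simp: ac_simps)
  then show disc: "4 * k * e \<le> a\<^sup>2" using ke by (simp add: power_mult_distrib)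
  then show "0 \<le> s" by simp
  have "s \<le> sqrt (a\<^sup>2)" by (rule real_sqrt_le_mono) (use ke in \<open>simp add: mult.commute\<close>)
  with \<open>0 \<le> a\<close> show "s \<le> a" by simp
qed

lemma small_root_degenerate: "a + s = 0 \<Longrightarrow> e = 0"
proof -
  assume "a + s = 0"
  then have "a = 0" "s = 0" using small_root_discriminant by linarith+
  then have "k * e = 0" using small_root_discriminant(2) k e by (simp add: power2_eq_square)
  moreover have "k \<noteq> 0" using \<open>a = 0\<close> by auto
  ultimately show "e = 0" by simp
qed

lemma small_root_nonneg: "0 \<le> small_root k e d"
  unfolding small_root_def
  by (rule divide_nonneg_nonneg) (use e small_root_discriminant(1,3) in linarith)+

lemma small_root_eq: "small_root k e d = e + k * ((small_root k e d)\<^sup>2 + 2 * small_root k e d * d)"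
proof (cases "a + s = 0")
  case True
  then show ?thesis using small_root_degenerate by (simp add: small_root_def)
next
  case False
  define r where "r = small_root k e d"
  have r: "r * (a + s) = 2 * e" using False by (simp add: r_def small_root_def)
  have s2: "s\<^sup>2 = a\<^sup>2 - 4 * k * e" using small_root_discriminant by simp
  have "(e + k * r\<^sup>2 - a * r) * (a + s)\<^sup>2 = e * (a + s)\<^sup>2 + k * (r * (a + s))\<^sup>2 - a * (a + s) * (r * (a + s))"
    by (simp add: algebra_simps power2_eq_square)
  also have "\<dots> = e * (s\<^sup>2 - a\<^sup>2 + 4 * k * e)"
    unfolding r by (simp add: algebra_simps power2_eq_square)
  also have "\<dots> = 0" using s2 by simp
  finally have "e + k * r\<^sup>2 - a * r = 0" using False by simp
  then show ?thesis unfolding r_def[symmetric] by (simp add: algebra_simps power2_eq_square)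
qed

lemma small_root_le: "2 * k * (small_root k e d + d) \<le> 1"
proof (cases "a + s = 0")
  case True
  then have "small_root k e d = 0" unfolding small_root_def by simp
  then show ?thesis using small_root_discriminant(1) by simp
next
  case False
  then have pos: "0 < a + s" using small_root_discriminant by linarith
  have "s\<^sup>2 = a\<^sup>2 - 4 * k * e" using small_root_discriminant by simp
  then have "2 * k * small_root k e d = a - s"
    using pos by (simp add: small_root_def field_simps power2_eq_square)
  then have "2 * k * (small_root k e d + d) = 1 - s" by (simp add: algebra_simps)
  with small_root_discriminant(3) show ?thesis by linarith
qed

lemma small_root_eq_quadratic_formula:
  assumes "0 < k"
  shows "small_root k e d = (1 - 2 * k * d - sqrt ((1 - 2 * k * d)\<^sup>2 - 4 * k * e)) / (2 * k)"
proof (cases "a + s = 0")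
  case True
  then have num: "a - s = 0" using small_root_discriminant by linarith
  have "small_root k e d = 0" unfolding small_root_def True by simp
  then show ?thesis unfolding num by simp
next
  case False
  have "s\<^sup>2 = a\<^sup>2 - 4 * k * e" using small_root_discriminant by simp
  then have "(a - s) * (a + s) = 2 * k * (2 * e)" by (simp add: algebra_simps power2_eq_square)
  then show ?thesis using False assms by (simp add: small_root_def field_simps)
qed

end

lemma small_root_mono:
  assumes k: "0 \<le> k" and e: "0 \<le> e" and kk': "k \<le> k'" and ee': "e \<le> e'"
    and dd': "0 \<le> d" "d \<le> d'" and small': "2 * sqrt (k' * e') + 2 * k' * d' \<le> 1"
  shows "small_root k e d \<le> small_root k' e' d'"
proof -
  have k': "0 \<le> k'" and e': "0 \<le> e'" using k kk' e ee' by linarith+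
  note disc' = small_root_discriminant[OF k' e' small']
  have kd: "k * d \<le> k' * d'" and ke: "k * e \<le> k' * e'"
    using k e kk' ee' dd' by (auto intro: mult_mono)
  then have a: "1 - 2 * k' * d' \<le> 1 - 2 * k * d" by simp
  then have "(1 - 2 * k' * d')\<^sup>2 \<le> (1 - 2 * k * d)\<^sup>2"
    using disc'(1) by (intro power_mono) auto
  then have s: "sqrt ((1 - 2 * k' * d')\<^sup>2 - 4 * k' * e') \<le> sqrt ((1 - 2 * k * d)\<^sup>2 - 4 * k * e)"
    using ke by (intro real_sqrt_le_mono) simp
  show ?thesis
  proof (cases "1 - 2 * k' * d' + sqrt ((1 - 2 * k' * d')\<^sup>2 - 4 * k' * e') = 0")
    case True
    then have "e = 0" using small_root_degenerate[OF k' e' small'] e ee' by simp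
    then show ?thesis using small_root_nonneg[OF k' e' small'] by (simp add: small_root_def)
  next
    case False
    then have "0 < 1 - 2 * k' * d' + sqrt ((1 - 2 * k' * d')\<^sup>2 - 4 * k' * e')"
      using disc'(1,3) by linarith
    moreover have "1 - 2 * k' * d' + sqrt ((1 - 2 * k' * d')\<^sup>2 - 4 * k' * e')
        \<le> 1 - 2 * k * d + sqrt ((1 - 2 * k * d)\<^sup>2 - 4 * k * e)"
      using a s by linarith
    ultimately show ?thesis
      unfolding small_root_def using e ee' by (intro frac_le) auto
  qed
qed

section \<open>Picard iteration on a ball around the approximate solution\<close>

lemma zero_in_Ico0: "0 < T \<Longrightarrow> 0 \<in> Ico0 T"
  by (simp add: Ico0_def zero_ereal_def)

lemma Icc_subset_Ico0: "b \<in> Ico0 T \<Longrightarrow> {0..b} \<subseteq> Ico0 T"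
  unfolding Ico0_def by (force intro: le_less_trans[of "ereal _" "ereal b"])

lemma Ico0_subset_Icc0: "Ico0 T \<subseteq> Icc0 T"
  by (auto simp: Ico0_def Icc0_def)

lemma Ico0_nonneg: "t \<in> Ico0 T \<Longrightarrow> 0 \<le> t"
  by (simp add: Ico0_def)

lemma Ico0_gt:
  assumes "t \<in> Ico0 T"
  shows "\<exists>b\<in>Ico0 T. t < b"
proof -
  from assms have "ereal t < T" "0 \<le> t" by (auto simp: Ico0_def)
  then obtain z where "ereal t < ereal z" "ereal z < T" using ereal_dense2 by blast
  then show ?thesis using \<open>0 \<le> t\<close> by (intro bexI[of _ z]) (auto simp: Ico0_def)
qed

lemma continuous_on_Ico0:
  assumes "\<And>b. b \<in> Ico0 T \<Longrightarrow> continuous_on {0..b} f"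
  shows "continuous_on (Ico0 T) f"
  unfolding continuous_on_def
proof
  fix t assume t: "t \<in> Ico0 T"
  obtain b where b: "b \<in> Ico0 T" "t < b" using Ico0_gt[OF t] by auto
  have "(f \<longlongrightarrow> f t) (at t within {0..b})"
    using assms[OF b(1)] t b Ico0_nonneg[OF t] unfolding continuous_on_def by simp
  moreover have "at t within {0..b} = at t within Ico0 T"
  proof (rule at_within_nhd[of t "{..<b}"])
    show "{0..b} \<inter> {..<b} - {t} = Ico0 T \<inter> {..<b} - {t}"
      using Icc_subset_Ico0[OF b(1)] by (auto simp: Ico0_def)
  qed (use b in auto)
  ultimately show "(f \<longlongrightarrow> f t) (at t within Ico0 T)" by simp
qed

lemma mono_on_le_terminal_value:
  fixes f :: "real \<Rightarrow> real"
  assumes mono: "mono_on (Icc0 T) f" and fin: "\<forall>r. T = ereal r \<longrightarrow> fT = f r"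
    and inf: "T = \<infinity> \<longrightarrow> (f \<longlongrightarrow> fT) at_top" and t: "t \<in> Ico0 T"
  shows "f t \<le> fT"
proof (cases T)
  case (real r)
  then have "f t \<le> f r" using t by (intro mono_onD[OF mono]) (auto simp: Icc0_def Ico0_def)
  then show ?thesis using fin real by simp
next
  case PInf
  have "\<forall>\<^sub>F x in at_top. f t \<le> f x"
    using eventually_ge_at_top[of t]
  proof eventually_elim
    case (elim x)
    then show ?case using t PInf by (intro mono_onD[OF mono]) (auto simp: Icc0_def Ico0_def)
  qed
  then show ?thesis using inf PInf by (intro tendsto_lowerbound[of f fT at_top]) auto
next
  case MInf
  then show ?thesis using t by (simp add: Ico0_def)
qed

lemma linear_if_injective_intertwines:
  fixes j :: "'f::real_normed_vector \<Rightarrow> 'm::real_normed_vector"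
  assumes j: "linear j" "inj j" and L: "linear L" and r: "\<And>x. j (f x) = L x"
  shows "linear f"
proof (rule linearI)
  show "f (x + y) = f x + f y" for x y
  proof -
    have "j (f (x + y)) = j (f x + f y)"
      using r linear_add[OF L] linear_add[OF j(1)] by simp
    then show ?thesis using j(2) by (simp add: inj_eq)
  qed
  show "f (c *\<^sub>R x) = c *\<^sub>R f x" for c x
  proof -
    have "j (f (c *\<^sub>R x)) = j (c *\<^sub>R f x)"
      using r linear_scale[OF L] linear_scale[OF j(1)] by simp
    then show ?thesis using j(2) by (simp add: inj_eq)
  qed
qed

lemma bilinear_diag_diff_norm_le:
  assumes P: "bilinear P" and K: "\<And>x y. norm (P x y) \<le> K * norm x * norm y"
  shows "norm (P x x - P y y) \<le> K * norm (x - y) * (norm x + norm y)"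
proof -
  have eq: "P x x - P y y = P (x - y) x + P y (x - y)"
    by (simp add: bilinear_lsub[OF P] bilinear_rsub[OF P])
  have "norm (P x x - P y y) \<le> K * norm (x - y) * norm x + K * norm y * norm (x - y)"
    unfolding eq using norm_triangle_ineq[of "P (x - y) x" "P y (x - y)"] K[of "x - y" x] K[of y "x - y"]
    by linarith
  also have "\<dots> = K * norm (x - y) * (norm x + norm y)"
    by (simp add: algebra_simps)
  finally show ?thesis .
qed

lemma bilinear_diag_diff_norm_le_quadratic:
  assumes P: "bilinear P" and K: "\<And>x y. norm (P x y) \<le> K * norm x * norm y"
  shows "norm (P x x - P y y) \<le> K * ((norm (x - y))\<^sup>2 + 2 * norm (x - y) * norm y)"
proof -
  have eq: "P x x - P y y = P (x - y) (x - y) + P (x - y) y + P y (x - y)"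
    by (simp add: bilinear_lsub[OF P] bilinear_rsub[OF P])
  have "norm (P x x - P y y) \<le> K * norm (x - y) * norm (x - y) + K * norm (x - y) * norm y + K * norm y * norm (x - y)"
    unfolding eq using norm_triangle_ineq[of "P (x - y) (x - y) + P (x - y) y" "P y (x - y)"]
      norm_triangle_ineq[of "P (x - y) (x - y)" "P (x - y) y"]
      K[of "x - y" "x - y"] K[of "x - y" y] K[of y "x - y"] by linarith
  also have "\<dots> = K * ((norm (x - y))\<^sup>2 + 2 * norm (x - y) * norm y)"
    by (simp add: algebra_simps power2_eq_square)
  finally show ?thesis .
qed

lemma geometric_increments_convergent:
  fixes x :: "nat \<Rightarrow> 'a::banach"
  assumes c: "0 \<le> c" "c < 1" and inc: "\<And>n. norm (x (Suc n) - x n) \<le> M * c ^ n"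
  shows "x \<longlonglongrightarrow> lim x" "norm (lim x - x n) \<le> M * c ^ n / (1 - c)"
proof -
  define d where "d n = x (Suc n) - x n" for n
  have geo: "summable (\<lambda>k. M * c ^ n * c ^ k)" for n
    using c by (intro summable_mult summable_geometric) simp
  have d: "summable d"
    by (rule summable_comparison_test'[OF geo[of 0]]) (use inc in \<open>simp add: d_def\<close>)
  have x_sum: "x n = x 0 + (\<Sum>k<n. d k)" for n
    unfolding d_def by (simp add: sum_lessThan_telescope)
  have "(\<lambda>n. x 0 + (\<Sum>k<n. d k)) \<longlonglongrightarrow> x 0 + suminf d"
    by (intro tendsto_add tendsto_const summable_LIMSEQ d)
  moreover have "(\<lambda>n. x 0 + (\<Sum>k<n. d k)) = x" by (rule ext) (rule x_sum[symmetric])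
  ultimately have "x \<longlonglongrightarrow> x 0 + suminf d" by simp
  then have lim: "lim x = x 0 + suminf d" by (rule limI)
  with \<open>x \<longlonglongrightarrow> x 0 + suminf d\<close> show "x \<longlonglongrightarrow> lim x" by simp
  have "lim x - x n = suminf d - (\<Sum>k<n. d k)"
    unfolding lim x_sum[of n] by simp
  also have "\<dots> = (\<Sum>k. d (k + n))"
    using suminf_split_initial_segment[OF d, of n] by simp
  also have "norm \<dots> \<le> (\<Sum>k. M * c ^ n * c ^ k)"
  proof (rule norm_suminf_le[OF _ geo])
    show "norm (d (k + n)) \<le> M * c ^ n * c ^ k" for k
      using inc[of "k + n"] by (simp add: d_def power_add ac_simps)
  qed
  also have "\<dots> = M * c ^ n / (1 - c)"
    using c by (simp add: suminf_mult suminf_geometric summable_geometric)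
  finally show "norm (lim x - x n) \<le> M * c ^ n / (1 - c)" .
qed

lemma continuous_on_Ico0_if_loc_lipschitz:
  assumes "loc_lipschitz_nonneg g"
  shows "continuous_on (Ico0 T) g"
proof (rule continuous_on_Ico0)
  fix b assume "b \<in> Ico0 T"
  then obtain L where "L-lipschitz_on {0..b} g"
    using assms by (auto simp: loc_lipschitz_nonneg_def Ico0_def)
  then show "continuous_on {0..b} g" by (rule lipschitz_on_continuous_on)
qed

lemma bounded_bilinear_if_norm_le:
  assumes P: "bilinear P" and K: "\<And>x y. norm (P x y) \<le> K * norm x * norm y"
  shows "bounded_bilinear P"
  unfolding bounded_bilinear_def
  using bilinear_ladd[OF P] bilinear_radd[OF P] bilinear_lmul[OF P] bilinear_rmul[OF P] K
  by (auto intro!: exI[of _ K] simp: ac_simps)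

locale quadratic_duhamel = duhamel_kernel Sm um
  for Sm :: "real \<Rightarrow> 'm::real_normed_vector \<Rightarrow> 'f::banach" and um +
  fixes SF :: "real \<Rightarrow> 'f \<Rightarrow> 'f" and P :: "'f \<Rightarrow> 'f \<Rightarrow> 'm" and K :: real and \<xi> :: "real \<Rightarrow> 'm"
    and U :: "real \<Rightarrow> real" and f0 :: 'f and T :: ereal and \<phi>ap :: "real \<Rightarrow> 'f"
    and E D :: "real \<Rightarrow> real" and UT ET DT :: real
  assumes T_pos: "0 < T"
    and SF_cont: "continuous_on (Ico0 T) (\<lambda>t. SF t f0)"
    and P_bilin: "bilinear P" and K_pos: "0 < K"
    and P_bound: "\<And>f g. norm (P f g) \<le> K * norm f * norm g"
    and \<xi>_cont: "continuous_on (Ico0 T) \<xi>"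
    and U_cont: "continuous_on (Ico0 T) U" and U_mono: "mono_on (Ico0 T) U"
    and U_int: "\<And>t. t \<in> Ico0 T \<Longrightarrow> integral {0..t} um \<le> U t" and U_0: "U 0 = 0"
    and U_le: "\<And>t. t \<in> Ico0 T \<Longrightarrow> U t \<le> UT"
    and \<phi>ap_cont: "continuous_on (Ico0 T) \<phi>ap"
    and E_mono: "mono_on (Ico0 T) E" and E_cont: "continuous_on (Ico0 T) E"
    and E_nonneg: "\<And>t. t \<in> Ico0 T \<Longrightarrow> 0 \<le> E t" and E_le: "\<And>t. t \<in> Ico0 T \<Longrightarrow> E t \<le> ET"
    and D_mono: "mono_on (Ico0 T) D" and D_cont: "continuous_on (Ico0 T) D"
    and D_nonneg: "\<And>t. t \<in> Ico0 T \<Longrightarrow> 0 \<le> D t" and D_le: "\<And>t. t \<in> Ico0 T \<Longrightarrow> D t \<le> DT"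
    and err_bound: "\<And>t. t \<in> Ico0 T \<Longrightarrow> norm (\<phi>ap t - SF t f0 - duhamel Sm P \<xi> \<phi>ap t) \<le> E t"
    and ap_bound: "\<And>t. t \<in> Ico0 T \<Longrightarrow> norm (\<phi>ap t) \<le> D t"
    and small: "2 * sqrt (K * UT * ET) + 2 * K * UT * DT \<le> 1"
begin

abbreviation "I \<equiv> Ico0 T"
abbreviation "R \<equiv> bound_R K U E D"

lemma U_nonneg: "t \<in> I \<Longrightarrow> 0 \<le> U t"
  using integral_um_nonneg[OF order_refl Ico0_nonneg] U_int by (rule order_trans)

lemma U_pos: "t \<in> I \<Longrightarrow> 0 < t \<Longrightarrow> 0 < U t"
  using integral_um_pos U_int by (rule less_le_trans)

lemma small_at:
  assumes t: "t \<in> I"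
  shows "2 * sqrt (K * U t * E t) + 2 * (K * U t) * D t \<le> 1"
proof -
  have "K * U t \<le> K * UT" using K_pos U_le[OF t] by simp
  then have "K * U t * E t \<le> K * UT * ET" "K * U t * D t \<le> K * UT * DT"
    using K_pos U_nonneg[OF t] E_nonneg[OF t] D_nonneg[OF t] E_le[OF t] D_le[OF t]
    by (intro mult_mono; simp)+
  then have "sqrt (K * U t * E t) \<le> sqrt (K * UT * ET)" "2 * (K * U t) * D t \<le> 2 * K * UT * DT"
    by simp_all
  with small show ?thesis by linarith
qed

lemma KU_nonneg: "t \<in> I \<Longrightarrow> 0 \<le> K * U t"
  using K_pos U_nonneg by simp

lemma R_eq_small_root:
  assumes t: "t \<in> I"
  shows "R t = small_root (K * U t) (E t) (D t)"
proof (cases "t = 0")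
  case True
  then show ?thesis by (simp add: bound_R_def small_root_def U_0)
next
  case False
  then have "0 < K * U t" using K_pos U_pos[OF t] Ico0_nonneg[OF t] by simp
  then show ?thesis
    using small_root_eq_quadratic_formula[OF KU_nonneg[OF t] E_nonneg[OF t] small_at[OF t]] False
    by (simp add: bound_R_def mult.assoc)
qed

lemma R_nonneg: "t \<in> I \<Longrightarrow> 0 \<le> R t"
  using R_eq_small_root small_root_nonneg[OF KU_nonneg E_nonneg small_at] by simp

lemma R_fixed_point: "t \<in> I \<Longrightarrow> R t = E t + K * U t * ((R t)\<^sup>2 + 2 * R t * D t)"
  using R_eq_small_root small_root_eq[OF KU_nonneg E_nonneg small_at] by simp

lemma KU_R_D_le: "t \<in> I \<Longrightarrow> 2 * K * U t * (R t + D t) \<le> 1"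
  using R_eq_small_root small_root_le[OF KU_nonneg E_nonneg small_at] by (simp add: mult.assoc)

lemma R_mono: "mono_on I R"
proof (rule mono_onI)
  fix s t assume s: "s \<in> I" and t: "t \<in> I" and st: "s \<le> t"
  have "K * U s \<le> K * U t" using mono_onD[OF U_mono s t st] K_pos by simp
  then show "R s \<le> R t"
    unfolding R_eq_small_root[OF s] R_eq_small_root[OF t]
    using D_nonneg[OF s] mono_onD[OF E_mono s t st] mono_onD[OF D_mono s t st]
    by (intro small_root_mono[OF KU_nonneg[OF s] E_nonneg[OF s] _ _ _ _ small_at[OF t]])
qed

\<comment> \<open>Up to some \<open>b > 0\<close> monotonicity bounds \<open>R\<close>, beyond it \<open>KU_R_D_le\<close> with \<open>U t \<ge> U b > 0\<close> does.\<close>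
lemma R_bounded: "\<exists>Rmax. \<forall>t\<in>I. R t \<le> Rmax"
proof -
  obtain b where b: "b \<in> I" "0 < b" using Ico0_gt[OF zero_in_Ico0[OF T_pos]] by auto
  have Ub: "0 < U b" by (rule U_pos[OF b])
  have "R t \<le> max (R b) (1 / (2 * K * U b))" if t: "t \<in> I" for t
  proof (cases "t \<le> b")
    case True
    then show ?thesis using mono_onD[OF R_mono t b(1)] by simp
  next
    case False
    then have "U b \<le> U t" using mono_onD[OF U_mono b(1) t] by simp
    then have "2 * K * U b * R t \<le> 2 * K * U t * (R t + D t)"
      using K_pos R_nonneg[OF t] D_nonneg[OF t] Ub
      by (intro mult_mono) simp_all
    also have "\<dots> \<le> 1" by (rule KU_R_D_le[OF t])
    finally have "R t \<le> 1 / (2 * K * U b)"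
      using K_pos Ub by (simp add: field_simps)
    then show ?thesis by simp
  qed
  then show ?thesis by (intro exI ballI)
qed

lemma R_cont: "continuous_on I R"
proof (cases "ET = 0")
  case True
  then have "E t = 0" if "t \<in> I" for t using E_nonneg[OF that] E_le[OF that] by simp
  then have R0: "R t = 0" if "t \<in> I" for t
    using R_eq_small_root[OF that] that by (simp add: small_root_def)
  show ?thesis by (rule continuous_on_eq[OF continuous_on_const]) (simp add: R0)
next
  case False
  have "0 \<le> ET" using E_nonneg[OF zero_in_Ico0[OF T_pos]] E_le[OF zero_in_Ico0[OF T_pos]] by (rule order_trans)
  with False have ETp: "0 < ET" by simp
  obtain b where b: "b \<in> I" "0 < b" using Ico0_gt[OF zero_in_Ico0[OF T_pos]] by auto
  have "0 < UT" using U_pos[OF b] U_le[OF b(1)] by simp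
  then have "0 < sqrt (K * UT * ET)" using K_pos ETp by simp
  then have a0: "0 < 1 - 2 * K * UT * DT" using small by linarith
  \<comment> \<open>The denominator of \<open>small_root\<close> stays above \<open>1 - 2 K UT DT > 0\<close>.\<close>
  have den: "1 - 2 * K * UT * DT \<le> 1 - 2 * (K * U t) * D t + sqrt ((1 - 2 * (K * U t) * D t)\<^sup>2 - 4 * (K * U t) * E t)"
    if t: "t \<in> I" for t
  proof -
    have "U t * D t \<le> UT * DT"
      using U_nonneg[OF t] D_nonneg[OF t] U_le[OF t] D_le[OF t] by (intro mult_mono) auto
    then have "1 - 2 * K * UT * DT \<le> 1 - 2 * (K * U t) * D t" using K_pos by simp
    then show ?thesis using small_root_discriminant(3)[OF KU_nonneg[OF t] E_nonneg[OF t] small_at[OF t]] by linarith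
  qed
  have "continuous_on I (\<lambda>t. small_root (K * U t) (E t) (D t))"
    unfolding small_root_def
  proof (intro continuous_intros U_cont D_cont E_cont ballI)
    fix t assume "t \<in> I"
    from less_le_trans[OF a0 den[OF this]]
    show "1 - 2 * (K * U t) * D t + sqrt ((1 - 2 * (K * U t) * D t)\<^sup>2 - 4 * (K * U t) * E t) \<noteq> 0"
      by simp
  qed
  then show ?thesis by (rule continuous_on_eq) (simp add: R_eq_small_root)
qed

definition nonlin :: "(real \<Rightarrow> 'f) \<Rightarrow> real \<Rightarrow> 'm" where
  "nonlin \<phi> s = P (\<phi> s) (\<phi> s) + \<xi> s"

definition picard :: "(real \<Rightarrow> 'f) \<Rightarrow> real \<Rightarrow> 'f" where
  "picard \<phi> t = SF t f0 + duhamel Sm P \<xi> \<phi> t"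

definition in_ball :: "(real \<Rightarrow> 'f) \<Rightarrow> bool" where
  "in_ball \<phi> \<longleftrightarrow> continuous_on I \<phi> \<and> (\<forall>t\<in>I. norm (\<phi> t - \<phi>ap t) \<le> R t)"

definition lip :: "real \<Rightarrow> real" where
  "lip t = 2 * K * (R t + D t)"

lemma lip_nonneg: "t \<in> I \<Longrightarrow> 0 \<le> lip t"
  using K_pos R_nonneg D_nonneg by (simp add: lip_def)

lemma lip_U_le: "t \<in> I \<Longrightarrow> lip t * U t \<le> 1"
  using KU_R_D_le by (simp add: lip_def ac_simps)

lemma lip_bounded: "\<exists>Lmax. \<forall>t\<in>I. lip t \<le> Lmax"
proof -
  obtain Rmax where Rmax: "\<And>t. t \<in> I \<Longrightarrow> R t \<le> Rmax" using R_bounded by blast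
  have "lip t \<le> 2 * K * (Rmax + DT)" if "t \<in> I" for t
    using Rmax[OF that] D_le[OF that] K_pos by (simp add: lip_def)
  then show ?thesis by blast
qed

lemma duhamel_eq_conv: "duhamel Sm P \<xi> \<phi> = conv (nonlin \<phi>)"
  by (simp add: fun_eq_iff duhamel_def conv_def nonlin_def)

lemma continuous_on_nonlin: "continuous_on I \<phi> \<Longrightarrow> continuous_on I (nonlin \<phi>)"
  unfolding nonlin_def
  by (intro continuous_intros \<xi>_cont bounded_bilinear.continuous_on[OF bounded_bilinear_if_norm_le[OF P_bilin P_bound]])

lemma continuous_on_nonlin_Icc: "continuous_on I \<phi> \<Longrightarrow> t \<in> I \<Longrightarrow> continuous_on {0..t} (nonlin \<phi>)"
  using continuous_on_subset[OF continuous_on_nonlin Icc_subset_Ico0] .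

lemma picard_integrable:
  assumes "continuous_on I \<phi>" "t \<in> I"
  shows "(\<lambda>s. Sm (t - s) (nonlin \<phi> s)) integrable_on {0..t}"
  using Sm_convolution_bounded(1)[of 0 t "nonlin \<phi>" "\<lambda>s. norm (nonlin \<phi> s)"]
    continuous_on_nonlin_Icc[OF assms] Ico0_nonneg[OF assms(2)]
  by (auto intro: continuous_intros)

lemma continuous_on_picard:
  assumes "continuous_on I \<phi>"
  shows "continuous_on I (picard \<phi>)"
proof -
  have "continuous_on I (conv (nonlin \<phi>))"
    by (intro continuous_on_Ico0 continuous_on_conv continuous_on_nonlin_Icc[OF assms] Ico0_nonneg)
  then show ?thesis
    unfolding picard_def duhamel_eq_conv by (intro continuous_intros SF_cont)
qed

lemma norm_in_ball_le:
  assumes "in_ball \<phi>" "t \<in> I" "s \<in> {0..t}"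
  shows "norm (\<phi> s) \<le> R t + D t"
proof -
  have s: "s \<in> I" using Icc_subset_Ico0[OF assms(2)] assms(3) by auto
  have "norm (\<phi> s - \<phi>ap s) \<le> R s" using assms(1) s by (simp add: in_ball_def)
  moreover have "R s \<le> R t" "D s \<le> D t"
    using mono_onD[OF R_mono s assms(2)] mono_onD[OF D_mono s assms(2)] assms(3) by auto
  ultimately show ?thesis
    using ap_bound[OF s] norm_triangle_sub[of "\<phi> s" "\<phi>ap s"] by linarith
qed

lemma norm_picard_diff_le:
  assumes \<phi>: "in_ball \<phi>" and \<psi>: "in_ball \<psi>" and t: "t \<in> I"
    and w: "continuous_on {0..t} w" and \<phi>\<psi>: "\<And>s. s \<in> {0..t} \<Longrightarrow> norm (\<phi> s - \<psi> s) \<le> w s"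
  shows "norm (picard \<phi> t - picard \<psi> t) \<le> lip t * integral {0..t} (\<lambda>s. um (t - s) * w s)"
proof -
  have "norm (nonlin \<phi> s - nonlin \<psi> s) \<le> lip t * w s" if s: "s \<in> {0..t}" for s
  proof -
    have "norm (nonlin \<phi> s - nonlin \<psi> s) \<le> K * norm (\<phi> s - \<psi> s) * (norm (\<phi> s) + norm (\<psi> s))"
      unfolding nonlin_def using bilinear_diag_diff_norm_le[OF P_bilin P_bound] by simp
    also have "\<dots> \<le> K * w s * (2 * (R t + D t))"
      using norm_in_ball_le[OF \<phi> t s] norm_in_ball_le[OF \<psi> t s] \<phi>\<psi>[OF s] K_pos
        order_trans[OF norm_ge_zero \<phi>\<psi>[OF s]]
      by (intro mult_mono) auto
    finally show ?thesis by (simp add: lip_def ac_simps)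
  qed
  then have "norm (picard \<phi> t - picard \<psi> t) \<le> integral {0..t} (\<lambda>s. um (t - s) * (lip t * w s))"
    unfolding picard_def duhamel_eq_conv using \<phi> \<psi> t Ico0_nonneg[OF t]
    by (auto simp: in_ball_def intro!: norm_conv_diff_le continuous_intros w continuous_on_nonlin_Icc)
  also have "(\<lambda>s. um (t - s) * (lip t * w s)) = (\<lambda>s. lip t * (um (t - s) * w s))"
    by (simp add: fun_eq_iff ac_simps)
  also have "integral {0..t} \<dots> = lip t * integral {0..t} (\<lambda>s. um (t - s) * w s)"
    by (rule integral_mult_right)
  finally show ?thesis .
qed

lemma norm_duhamel_diff_ap_le:
  assumes \<phi>: "in_ball \<phi>" and t: "t \<in> I"
  shows "norm (duhamel Sm P \<xi> \<phi> t - duhamel Sm P \<xi> \<phi>ap t) \<le> K * ((R t)\<^sup>2 + 2 * R t * D t) * U t"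
proof -
  define C where "C = K * ((R t)\<^sup>2 + 2 * R t * D t)"
  have dev: "norm (nonlin \<phi> s - nonlin \<phi>ap s) \<le> C" if s: "s \<in> {0..t}" for s
  proof -
    have sI: "s \<in> I" using Icc_subset_Ico0[OF t] s by auto
    have d: "norm (\<phi> s - \<phi>ap s) \<le> R t"
      using \<phi> sI mono_onD[OF R_mono sI t] s by (force simp: in_ball_def)
    have "norm (nonlin \<phi> s - nonlin \<phi>ap s) \<le> K * ((norm (\<phi> s - \<phi>ap s))\<^sup>2 + 2 * norm (\<phi> s - \<phi>ap s) * norm (\<phi>ap s))"
      unfolding nonlin_def using bilinear_diag_diff_norm_le_quadratic[OF P_bilin P_bound] by simp
    also have "\<dots> \<le> C"
      unfolding C_def using d ap_bound[OF sI] mono_onD[OF D_mono sI t] s K_pos R_nonneg[OF t]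
      by (intro mult_left_mono add_mono power_mono mult_mono) auto
    finally show ?thesis .
  qed
  have "norm (duhamel Sm P \<xi> \<phi> t - duhamel Sm P \<xi> \<phi>ap t) \<le> integral {0..t} (\<lambda>s. um (t - s) * C)"
    unfolding duhamel_eq_conv
    by (rule norm_conv_diff_le[OF Ico0_nonneg[OF t] continuous_on_nonlin_Icc continuous_on_nonlin_Icc
          continuous_on_const]) (use dev \<phi> t \<phi>ap_cont in \<open>auto simp: in_ball_def\<close>)
  also have "\<dots> \<le> C * integral {t - t..t - 0} um"
    using Ico0_nonneg[OF t] by (intro kernel_weighted_integral_le) auto
  also have "\<dots> \<le> C * U t"
    using U_int[OF t] K_pos R_nonneg[OF t] D_nonneg[OF t] by (simp add: C_def mult_left_mono)
  finally show ?thesis by (simp add: C_def)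
qed

\<comment> \<open>The radius \<open>R t\<close> is chosen exactly so that \<open>E t + K U t (R\<^sup>2 + 2 R D) = R t\<close>.\<close>
lemma picard_in_ball:
  assumes \<phi>: "in_ball \<phi>"
  shows "in_ball (picard \<phi>)"
  unfolding in_ball_def
proof (intro conjI ballI)
  show "continuous_on I (picard \<phi>)" using \<phi> continuous_on_picard by (simp add: in_ball_def)
  fix t assume t: "t \<in> I"
  have decomp: "picard \<phi> t - \<phi>ap t
      = (duhamel Sm P \<xi> \<phi> t - duhamel Sm P \<xi> \<phi>ap t) - (\<phi>ap t - SF t f0 - duhamel Sm P \<xi> \<phi>ap t)"
    by (simp add: picard_def algebra_simps)
  have "norm (picard \<phi> t - \<phi>ap t) \<le> K * ((R t)\<^sup>2 + 2 * R t * D t) * U t + E t"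
    unfolding decomp using norm_duhamel_diff_ap_le[OF \<phi> t] err_bound[OF t]
      norm_triangle_ineq4[of "duhamel Sm P \<xi> \<phi> t - duhamel Sm P \<xi> \<phi>ap t" "\<phi>ap t - SF t f0 - duhamel Sm P \<xi> \<phi>ap t"]
    by linarith
  also have "\<dots> = R t" using R_fixed_point[OF t] by (simp add: algebra_simps)
  finally show "norm (picard \<phi> t - \<phi>ap t) \<le> R t" .
qed

lemma exists_small_U:
  assumes L: "0 \<le> L"
  shows "\<exists>\<delta>\<in>I. 0 < \<delta> \<and> L * U \<delta> \<le> 1/4"
proof -
  define \<epsilon> where "\<epsilon> = 1 / (4 * (L + 1))"
  have "0 < \<epsilon>" using L by (simp add: \<epsilon>_def)
  moreover have "(U \<longlongrightarrow> 0) (at 0 within I)"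
    using U_cont zero_in_Ico0[OF T_pos] U_0 unfolding continuous_on_def by force
  ultimately have "\<forall>\<^sub>F x in at 0 within I. U x < \<epsilon>" by (auto dest: order_tendstoD(2))
  then obtain \<eta> where \<eta>: "0 < \<eta>" and U\<eta>: "\<And>x. x \<in> I \<Longrightarrow> x \<noteq> 0 \<Longrightarrow> dist x 0 < \<eta> \<Longrightarrow> U x < \<epsilon>"
    unfolding eventually_at by blast
  obtain b where b: "b \<in> I" "0 < b" using Ico0_gt[OF zero_in_Ico0[OF T_pos]] by auto
  define \<delta> where "\<delta> = min b (\<eta> / 2)"
  have \<delta>: "0 < \<delta>" "\<delta> \<in> I" using b \<eta> Icc_subset_Ico0[OF b(1)] by (auto simp: \<delta>_def)
  have "U \<delta> < \<epsilon>" using U\<eta>[OF \<delta>(2)] \<delta> \<eta> by (auto simp: \<delta>_def)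
  then have "L * U \<delta> \<le> L * \<epsilon>" using L by (intro mult_left_mono) auto
  also have "\<dots> \<le> 1/4" using L by (simp add: \<epsilon>_def field_simps)
  finally show ?thesis using \<delta> by blast
qed

\<comment> \<open>With the weight \<open>exp (\<gamma> s)\<close>, \<open>\<gamma> = ln 2 / \<delta>\<close>, the part of the kernel away from the singularity
  contributes at most \<open>lip t * U t / 2 \<le> 1/2\<close> and the part near it at most \<open>1/4\<close>.\<close>
lemma exists_exp_weight:
  "\<exists>\<gamma>\<ge>0. \<forall>t\<in>I. lip t * integral {0..t} (\<lambda>s. um (t - s) * exp (\<gamma> * s)) \<le> 3/4 * exp (\<gamma> * t)"
proof -
  obtain Lmax where lip_le: "\<And>t. t \<in> I \<Longrightarrow> lip t \<le> Lmax" using lip_bounded by blast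
  have Lmax: "0 \<le> Lmax" using lip_nonneg lip_le zero_in_Ico0[OF T_pos] by (meson order_trans)
  obtain \<delta> where \<delta>: "\<delta> \<in> I" "0 < \<delta>" and LU\<delta>: "Lmax * U \<delta> \<le> 1/4"
    using exists_small_U[OF Lmax] by blast
  define \<gamma> where "\<gamma> = ln 2 / \<delta>"
  have "lip t * integral {0..t} (\<lambda>s. um (t - s) * exp (\<gamma> * s)) \<le> 3/4 * exp (\<gamma> * t)" if t: "t \<in> I" for t
  proof -
    have "lip t * integral {0..t} (\<lambda>s. um (t - s) * exp (\<gamma> * s))
        \<le> lip t * (exp (\<gamma> * t) * (integral {0..t} um / 2 + integral {0..\<delta>} um))"
      unfolding \<gamma>_def using kernel_exp_weighted_le[OF \<delta>(2) Ico0_nonneg[OF t]] lip_nonneg[OF t]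
      by (rule mult_left_mono)
    also have "\<dots> = exp (\<gamma> * t) * (lip t * integral {0..t} um / 2 + lip t * integral {0..\<delta>} um)"
      by (simp add: algebra_simps)
    also have "\<dots> \<le> exp (\<gamma> * t) * (lip t * U t / 2 + Lmax * U \<delta>)"
    proof (rule mult_left_mono[OF _ exp_ge_zero])
      have "lip t * integral {0..t} um \<le> lip t * U t"
        using U_int[OF t] lip_nonneg[OF t] by (rule mult_left_mono)
      moreover have "lip t * integral {0..\<delta>} um \<le> Lmax * U \<delta>"
        using U_int[OF \<delta>(1)] lip_le[OF t] lip_nonneg[OF t] integral_um_nonneg[OF order_refl Ico0_nonneg[OF \<delta>(1)]]
        by (intro mult_mono) auto
      ultimately show "lip t * integral {0..t} um / 2 + lip t * integral {0..\<delta>} um \<le> lip t * U t / 2 + Lmax * U \<delta>"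
        by linarith
    qed
    also have "\<dots> \<le> exp (\<gamma> * t) * (1/2 + 1/4)"
    proof (rule mult_left_mono[OF _ exp_ge_zero])
      from lip_U_le[OF t] LU\<delta> show "lip t * U t / 2 + Lmax * U \<delta> \<le> 1/2 + 1/4" by linarith
    qed
    finally show ?thesis by simp
  qed
  moreover have "0 \<le> \<gamma>" using \<delta> by (simp add: \<gamma>_def)
  ultimately show ?thesis by blast
qed

context
  fixes \<gamma> Rmax :: real
  assumes \<gamma>: "0 \<le> \<gamma>"
    and weight: "\<And>t. t \<in> I \<Longrightarrow> lip t * integral {0..t} (\<lambda>s. um (t - s) * exp (\<gamma> * s)) \<le> 3/4 * exp (\<gamma> * t)"
    and Rmax: "\<And>t. t \<in> I \<Longrightarrow> R t \<le> Rmax"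
begin

lemma picard_contraction:
  assumes \<phi>: "in_ball \<phi>" and \<psi>: "in_ball \<psi>" and t: "t \<in> I"
    and M: "\<And>s. s \<in> I \<Longrightarrow> norm (\<phi> s - \<psi> s) \<le> M * exp (\<gamma> * s)"
  shows "norm (picard \<phi> t - picard \<psi> t) \<le> 3/4 * M * exp (\<gamma> * t)"
proof -
  have "0 \<le> M * exp (\<gamma> * t)" using M[OF t] norm_ge_zero order_trans by blast
  then have M0: "0 \<le> M" by (simp add: zero_le_mult_iff)
  have "norm (picard \<phi> t - picard \<psi> t) \<le> lip t * integral {0..t} (\<lambda>s. um (t - s) * (M * exp (\<gamma> * s)))"
    using M Icc_subset_Ico0[OF t]
    by (intro norm_picard_diff_le[OF \<phi> \<psi> t] continuous_intros) auto
  also have "\<dots> = M * (lip t * integral {0..t} (\<lambda>s. um (t - s) * exp (\<gamma> * s)))"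
    by (simp add: ac_simps)
  also have "\<dots> \<le> M * (3/4 * exp (\<gamma> * t))" using weight[OF t] M0 by (rule mult_left_mono)
  finally show ?thesis by simp
qed

lemma picard_iterate_in_ball: "in_ball ((picard ^^ n) \<phi>ap)"
proof (induction n)
  case 0
  show ?case using \<phi>ap_cont R_nonneg by (simp add: in_ball_def)
next
  case (Suc n)
  then show ?case by (simp add: picard_in_ball)
qed

lemma picard_iterate_increment:
  "t \<in> I \<Longrightarrow> norm ((picard ^^ Suc n) \<phi>ap t - (picard ^^ n) \<phi>ap t) \<le> Rmax * (3/4) ^ n * exp (\<gamma> * t)"
proof (induction n arbitrary: t)
  case 0
  have "norm (picard \<phi>ap t - \<phi>ap t) \<le> Rmax"
    using picard_in_ball[OF picard_iterate_in_ball[of 0]] Rmax[OF 0] 0 by (force simp: in_ball_def)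
  also have "\<dots> \<le> Rmax * exp (\<gamma> * t)"
    using Rmax[OF 0] R_nonneg[OF 0] \<gamma> Ico0_nonneg[OF 0] by (simp add: mult_le_cancel_left1)
  finally show ?case by simp
next
  case (Suc n)
  have "norm (picard ((picard ^^ Suc n) \<phi>ap) t - picard ((picard ^^ n) \<phi>ap) t)
      \<le> 3/4 * (Rmax * (3/4) ^ n) * exp (\<gamma> * t)"
    by (rule picard_contraction[OF picard_iterate_in_ball picard_iterate_in_ball Suc.prems Suc.IH])
  then show ?case by (simp add: ac_simps)
qed

definition picard_limit :: "real \<Rightarrow> 'f" where
  "picard_limit t = lim (\<lambda>n. (picard ^^ n) \<phi>ap t)"

lemma picard_limit:
  assumes t: "t \<in> I"
  shows "(\<lambda>n. (picard ^^ n) \<phi>ap t) \<longlonglongrightarrow> picard_limit t"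
    "norm (picard_limit t - (picard ^^ n) \<phi>ap t) \<le> 4 * Rmax * (3/4) ^ n * exp (\<gamma> * t)"
  using geometric_increments_convergent[of "3/4" "\<lambda>n. (picard ^^ n) \<phi>ap t" "Rmax * exp (\<gamma> * t)"]
    picard_iterate_increment[OF t]
  by (simp_all add: picard_limit_def ac_simps)

lemma uniform_limit_picard_iterates:
  assumes b: "b \<in> I"
  shows "uniform_limit {0..b} (\<lambda>n. (picard ^^ n) \<phi>ap) picard_limit sequentially"
proof (rule uniform_limitI)
  fix e :: real assume "0 < e"
  have "(\<lambda>n. 4 * Rmax * exp (\<gamma> * b) * (3/4) ^ n) \<longlonglongrightarrow> 0"
    by (intro tendsto_mult_right_zero LIMSEQ_power_zero) simp
  with \<open>0 < e\<close> have "\<forall>\<^sub>F n in sequentially. 4 * Rmax * exp (\<gamma> * b) * (3/4) ^ n < e"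
    by (auto dest: order_tendstoD(2))
  then show "\<forall>\<^sub>F n in sequentially. \<forall>s\<in>{0..b}. dist ((picard ^^ n) \<phi>ap s) (picard_limit s) < e"
  proof eventually_elim
    case (elim n)
    show ?case
    proof
      fix s assume s: "s \<in> {0..b}"
      then have sI: "s \<in> I" using Icc_subset_Ico0[OF b] by auto
      have "exp (\<gamma> * s) \<le> exp (\<gamma> * b)" using s \<gamma> by (simp add: mult_left_mono)
      then have "4 * Rmax * (3/4) ^ n * exp (\<gamma> * s) \<le> 4 * Rmax * exp (\<gamma> * b) * (3/4) ^ n"
        using Rmax[OF sI] R_nonneg[OF sI] by (simp add: mult_left_mono)
      then show "dist ((picard ^^ n) \<phi>ap s) (picard_limit s) < e"
        using picard_limit(2)[OF sI, of n] elim by (simp add: dist_norm norm_minus_commute)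
    qed
  qed
qed

lemma picard_limit_in_ball: "in_ball picard_limit"
  unfolding in_ball_def
proof (intro conjI ballI)
  show "continuous_on I picard_limit"
  proof (rule continuous_on_Ico0)
    fix b assume b: "b \<in> I"
    have "continuous_on {0..b} ((picard ^^ n) \<phi>ap)" for n
      using picard_iterate_in_ball Icc_subset_Ico0[OF b] by (auto simp: in_ball_def intro: continuous_on_subset)
    then show "continuous_on {0..b} picard_limit"
      using uniform_limit_theorem[OF always_eventually[OF allI] uniform_limit_picard_iterates[OF b]] by simp
  qed
next
  fix t assume t: "t \<in> I"
  have "(\<lambda>n. norm ((picard ^^ n) \<phi>ap t - \<phi>ap t)) \<longlonglongrightarrow> norm (picard_limit t - \<phi>ap t)"
    by (intro tendsto_norm tendsto_diff picard_limit(1)[OF t] tendsto_const)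
  then show "norm (picard_limit t - \<phi>ap t) \<le> R t"
    using picard_iterate_in_ball t by (intro LIMSEQ_le_const2) (auto simp: in_ball_def)
qed

lemma picard_limit_fixed:
  assumes t: "t \<in> I"
  shows "picard picard_limit t = picard_limit t"
proof -
  have "norm ((picard ^^ Suc n) \<phi>ap t - picard picard_limit t) \<le> 3 * Rmax * exp (\<gamma> * t) * (3/4) ^ n" for n
  proof -
    have "norm (picard picard_limit t - picard ((picard ^^ n) \<phi>ap) t) \<le> 3/4 * (4 * Rmax * (3/4) ^ n) * exp (\<gamma> * t)"
      by (rule picard_contraction[OF picard_limit_in_ball picard_iterate_in_ball t picard_limit(2)])
    then show ?thesis by (subst norm_minus_commute) (simp add: ac_simps)
  qed
  then have "(\<lambda>n. (picard ^^ Suc n) \<phi>ap t - picard picard_limit t) \<longlonglongrightarrow> 0"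
    by (rule Lim_null_comparison[OF always_eventually[OF allI]])
      (intro tendsto_mult_right_zero LIMSEQ_power_zero, simp)
  then have "(\<lambda>n. (picard ^^ Suc n) \<phi>ap t) \<longlonglongrightarrow> picard picard_limit t"
    by (rule LIM_zero_cancel)
  moreover have "(\<lambda>n. (picard ^^ Suc n) \<phi>ap t) \<longlonglongrightarrow> picard_limit t"
    using picard_limit(1)[OF t] by (rule LIMSEQ_Suc)
  ultimately show ?thesis by (rule LIMSEQ_unique)
qed

end

lemma exists_fixed_point: "\<exists>\<phi>. in_ball \<phi> \<and> (\<forall>t\<in>I. picard \<phi> t = \<phi> t)"
proof -
  obtain \<gamma> where \<gamma>: "0 \<le> \<gamma>"
    and weight: "\<And>t. t \<in> I \<Longrightarrow> lip t * integral {0..t} (\<lambda>s. um (t - s) * exp (\<gamma> * s)) \<le> 3/4 * exp (\<gamma> * t)"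
    using exists_exp_weight by auto
  obtain Rmax where Rmax: "\<And>t. t \<in> I \<Longrightarrow> R t \<le> Rmax" using R_bounded by auto
  show ?thesis
  proof (intro exI[of _ picard_limit] conjI ballI)
    show "in_ball picard_limit" by (rule picard_limit_in_ball[OF \<gamma> weight Rmax])
    show "picard picard_limit t = picard_limit t" if "t \<in> I" for t
      by (rule picard_limit_fixed[OF \<gamma> weight Rmax that])
  qed
qed

lemma mild_solution:
  "\<exists>\<phi>. continuous_on I \<phi> \<and>
     (\<forall>t\<in>I. (\<lambda>s. Sm (t - s) (P (\<phi> s) (\<phi> s) + \<xi> s)) integrable_on {0..t}
             \<and> \<phi> t = SF t f0 + duhamel Sm P \<xi> \<phi> t) \<and>
     (\<forall>t\<in>I. norm (\<phi> t - \<phi>ap t) \<le> R t)"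
proof -
  obtain \<phi> where \<phi>: "in_ball \<phi>" and fixed: "\<And>t. t \<in> I \<Longrightarrow> picard \<phi> t = \<phi> t"
    using exists_fixed_point by blast
  have "continuous_on I \<phi>" using \<phi> by (simp add: in_ball_def)
  with picard_integrable[of \<phi>] fixed[symmetric] \<phi> show ?thesis
    unfolding picard_def nonlin_def in_ball_def by blast
qed

end

theorem proposition5p6:
  fixes jp :: "'p::banach \<Rightarrow> 'f::banach"
    and jf :: "'f \<Rightarrow> 'm::banach"
    and A :: "'p \<Rightarrow> 'm"
    and S :: "real \<Rightarrow> 'm \<Rightarrow> 'm"
    and SF :: "real \<Rightarrow> 'f \<Rightarrow> 'f"
    and Sm :: "real \<Rightarrow> 'm \<Rightarrow> 'f"
    and u :: "real \<Rightarrow> real" and um :: "real \<Rightarrow> real" and \<sigma> :: real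
    and P :: "'f \<Rightarrow> 'f \<Rightarrow> 'm" and K :: real
    and \<xi> :: "real \<Rightarrow> 'm"
    and U :: "real \<Rightarrow> real" and UT :: real
    and f0 :: 'f and T :: ereal and \<phi>ap :: "real \<Rightarrow> 'f"
    and \<E> \<D> :: "real \<Rightarrow> real" and ET DT :: real
  assumes emb_p: "dense_embedding jp"
    and emb_f: "dense_embedding jf"
    and A_lin: "linear A"
    and A_norm: "\<exists>c C. 0 < c \<and> 0 < C \<and> (\<forall>p. c * (norm (jf (jp p)) + norm (A p)) \<le> norm p
                        \<and> norm p \<le> C * (norm (jf (jp p)) + norm (A p)))"
    and S_C0: "C0_semigroup S"
    and S_gen: "generates (\<lambda>p. jf (jp p)) A S"
    and SF_restr: "\<forall>t\<ge>0. \<forall>f. jf (SF t f) = S t (jf f)"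
    and SF_cont: "continuous_on (UNIV \<times> {0..}) (\<lambda>(f, t). SF t f)"
    and SF_bound: "\<forall>t\<ge>0. \<forall>f. norm (SF t f) \<le> u t * norm f"
    and u_cont: "continuous_on {0..} u" and u_pos: "\<forall>t\<ge>0. u t > 0"
    and Sm_restr: "\<forall>t>0. \<forall>g. jf (Sm t g) = S t g"
    and Sm_cont: "continuous_on (UNIV \<times> {0<..}) (\<lambda>(g, t). Sm t g)"
    and Sm_bound: "\<forall>t>0. \<forall>g. norm (Sm t g) \<le> um t * norm g"
    and um_cont: "continuous_on {0<..} um" and um_pos: "\<forall>t>0. um t > 0"
    and \<sigma>: "0 < \<sigma>" "\<sigma> \<le> 1"
    and um_sing: "um \<in> O[at_right 0](\<lambda>t. t powr (-(1 - \<sigma>)))"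
    and P_bilin: "bilinear P"
    and K_pos: "0 < K"
    and P_bound: "\<forall>f g. norm (P f g) \<le> K * norm f * norm g"
    and \<xi>_lip: "loc_lipschitz_nonneg \<xi>"
    and U_cont: "continuous_on {0..} U"
    and U_nonneg: "\<forall>t\<ge>0. U t \<ge> 0"
    and U_mono: "mono_on {0..} U"
    and U_int: "\<forall>t\<ge>0. integral {0..t} um \<le> U t"
    and U_0: "U 0 = 0"
    and T_pos: "T > 0"
    and UT: "\<forall>r. T = ereal r \<longrightarrow> UT = U r" "T = \<infinity> \<longrightarrow> (U \<longlongrightarrow> UT) at_top"
    and \<phi>ap_cont: "continuous_on (Ico0 T) \<phi>ap"
    and E_cont: "continuous_on (Icc0 T) \<E>" and E_mono: "mono_on (Icc0 T) \<E>"
    and E_nonneg: "\<forall>t\<in>Icc0 T. \<E> t \<ge> 0"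
    and D_cont: "continuous_on (Icc0 T) \<D>" and D_mono: "mono_on (Icc0 T) \<D>"
    and D_nonneg: "\<forall>t\<in>Icc0 T. \<D> t \<ge> 0"
    and ET: "\<forall>r. T = ereal r \<longrightarrow> ET = \<E> r" "T = \<infinity> \<longrightarrow> (\<E> \<longlongrightarrow> ET) at_top"
    and DT: "\<forall>r. T = ereal r \<longrightarrow> DT = \<D> r" "T = \<infinity> \<longrightarrow> (\<D> \<longlongrightarrow> DT) at_top"
    and err_bound: "\<forall>t\<in>Ico0 T.
          norm (\<phi>ap t - SF t f0 - duhamel Sm P \<xi> \<phi>ap t) \<le> \<E> t"
    and ap_bound: "\<forall>t\<in>Ico0 T. norm (\<phi>ap t) \<le> \<D> t"
    and small: "2 * sqrt (K * UT * ET) + 2 * K * UT * DT \<le> 1"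
  shows "(\<exists>\<phi> :: real \<Rightarrow> 'f.
            continuous_on (Ico0 T) \<phi> \<and>
            (\<forall>t\<in>Ico0 T. (\<lambda>s. Sm (t - s) (P (\<phi> s) (\<phi> s) + \<xi> s)) integrable_on {0..t}
                         \<and> \<phi> t = SF t f0 + duhamel Sm P \<xi> \<phi> t) \<and>
            (\<forall>t\<in>Ico0 T. norm (\<phi> t - \<phi>ap t) \<le> bound_R K U \<E> \<D> t))
         \<and> continuous_on (Ico0 T) (bound_R K U \<E> \<D>)
         \<and> mono_on (Ico0 T) (bound_R K U \<E> \<D>)
         \<and> (\<forall>t\<in>Ico0 T. bound_R K U \<E> \<D> t \<ge> 0)"
proof -
  (* Only the mild formulation enters the argument: the generator A, the space F\<^sub>+ and the bound u
     on F merely describe the setting. *)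
  have um_int: "um integrable_on {0..t}" if "0 \<le> t" for t
    using integrable_on_Icc_singular_at_0[OF um_cont \<sigma>(1) um_sing that] .
  have "linear jf" "inj jf" using emb_f by (auto simp: dense_embedding_def bounded_linear.linear)
  then have Sm_linear: "linear (Sm t)" if "0 < t" for t
    using linear_if_injective_intertwines[of jf "S t" "Sm t"] S_C0 Sm_restr that
    by (auto simp: C0_semigroup_def bounded_linear.linear)
  have "continuous_on (Ico0 T) (\<lambda>t. (\<lambda>(f, t). SF t f) (f0, t))"
    by (rule continuous_on_compose2[OF SF_cont]) (auto simp: Ico0_def intro!: continuous_intros)
  moreover have "continuous_on (Ico0 T) \<xi>"
    using \<xi>_lip by (rule continuous_on_Ico0_if_loc_lipschitz)
  moreover have "U t \<le> UT" "\<E> t \<le> ET" "\<D> t \<le> DT" if "t \<in> Ico0 T" for t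
    using mono_on_le_terminal_value[OF mono_on_subset[OF U_mono] UT] E_mono ET D_mono DT that
    by (auto simp: Icc0_def intro: mono_on_le_terminal_value)
  moreover have I: "Ico0 T \<subseteq> {0..}" "Ico0 T \<subseteq> Icc0 T"
    using Ico0_nonneg Ico0_subset_Icc0 by auto
  ultimately interpret quadratic_duhamel Sm um SF P K \<xi> U f0 T \<phi>ap \<E> \<D> UT ET DT
    using Sm_cont Sm_bound um_cont um_pos um_int Sm_linear T_pos P_bilin K_pos P_bound U_int U_0
      continuous_on_subset[OF U_cont I(1)] mono_on_subset[OF U_mono I(1)] \<phi>ap_cont
      continuous_on_subset[OF E_cont I(2)] mono_on_subset[OF E_mono I(2)] E_nonneg
      continuous_on_subset[OF D_cont I(2)] mono_on_subset[OF D_mono I(2)] D_nonneg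
      err_bound ap_bound small I
    by (intro quadratic_duhamel.intro duhamel_kernel.intro quadratic_duhamel_axioms.intro) auto
  show ?thesis
    using R_nonneg by (intro conjI ballI mild_solution R_cont R_mono) simp
qed

end
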